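(* Let $\mathbb{X}=\{p_1,\dots,p_n\}\subseteq\mathbb{P}^{k-1}$ with $n\ge2$, let $L\in P_1$ vanish at no point of $\mathbb{X}$, for each $i$ let $v_i=(p_{i1},\dots,p_{ik})\in\mathbb{F}_q^k$ be the coordinate vector of $p_i$ with $L(v_i)=1$, and let $\widehat{\mathfrak{J}}_{\mathbb{X}}\subseteq P$ be the preimage of the canonical ideal $\mathfrak{J}_{R/\mathbb{F}_q[\ell]}$. Then: (a) $(\widehat{\mathfrak{J}}_{\mathbb{X}})_{2r_{\mathbb{X}}-1}=\{g\in P_{2r_{\mathbb{X}}-1}: g(v_1)+\cdots+g(v_n)=0\}$; (b) the element $\Phi_{\mathbb{X}}=\sum_{\alpha\in\mathbb{N}^k,\,|\alpha|=2r_{\mathbb{X}}-1}\Big(\sum_{i=1}^np_{i1}^{\alpha_1}\cdots p_{ik}^{\alpha_k}\Big)\pi^{[\alpha]}\in\mathcal{D}_{-(2r_{\mathbb{X}}-1)}$ (i.e. the functional $g\mapsto\sum_ig(v_i)$ on $P_{2r_{\mathbb{X}}-1}$) is nonzero and generates the Macaulay inverse system of $\widehat{\mathfrak{J}}_{\mathbb{X}}$: $(\widehat{\mathfrak{J}}_{\mathbb{X}})^\perp=P\circ\Phi_{\mathbb{X}}$.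
   Context: $P=\mathbb{F}_q[x_1,\dots,x_k]$ standard graded; $\mathbb{X}$ a set of $n$ distinct $\mathbb{F}_q$-rational points of $\mathbb{P}^{k-1}$, $I_{\mathbb{X}}$ its vanishing ideal, $R=P/I_{\mathbb{X}}$, $r_{\mathbb{X}}=\min\{i\ge0:\dim R_i=n\}$; $\ell$ the class of $L$ in $R$. With $f(p_j)=f(v_j)$, the separators are the unique $f_1,\dots,f_n\in R_{r_{\mathbb{X}}}$ with $f_i(p_j)=\delta_{ij}$, and the canonical ideal is $\mathfrak{J}_{R/\mathbb{F}_q[\ell]}=\{\sum_i\varphi(f_i)f_i:\varphi\in\mathrm{Hom}_{\mathbb{F}_q[\ell]}(R,\mathbb{F}_q[\ell])\}\subseteq R$. $\mathcal{D}=\bigoplus_{j\ge0}\mathrm{Hom}_{\mathbb{F}_q}(P_j,\mathbb{F}_q)$ with $\mathcal{D}_{-j}=\mathrm{Hom}(P_j,\mathbb{F}_q)$ and basis $\pi^{[\beta]}$ dual to the monomials, $\pi^{[\beta]}(x^\alpha)=\delta_{\alpha\beta}$. $P$ acts by contraction: for $f\in P_d$, $\psi\in\mathcal{D}_{-j}$, $(f\circ\psi)(g)=\psi(fg)$ for $g\in P_{j-d}$. For a homogeneous ideal $J$, $J^\perp=\{\psi\in\mathcal{D}:f\circ\psi=0\ \forall f\in J\}$, and $P\circ\Phi$ is the submodule generated by $\Phi$. *)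

theory Defs
  imports "HOL-Library.Poly_Mapping"
begin

text \<open>The ring P = F_q[x_1..x_k]
  is the set of those polynomials involving only the variables with index < k.\<close>

type_synonym 'a mpoly = "(nat \<Rightarrow>\<^sub>0 nat) \<Rightarrow>\<^sub>0 'a"

definition mdeg :: "(nat \<Rightarrow>\<^sub>0 nat) \<Rightarrow> nat" where
  "mdeg \<alpha> = (\<Sum>i\<in>Poly_Mapping.keys \<alpha>. Poly_Mapping.lookup \<alpha> i)"

definition Pk :: "nat \<Rightarrow> ('a::zero) mpoly set" where
  "Pk k = {f. \<forall>\<alpha>\<in>Poly_Mapping.keys f. Poly_Mapping.keys \<alpha> \<subseteq> {..<k}}"

definition homog :: "nat \<Rightarrow> ('a::zero) mpoly \<Rightarrow> bool" where
  "homog d f \<longleftrightarrow> (\<forall>\<alpha>\<in>Poly_Mapping.keys f. mdeg \<alpha> = d)"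

definition Pd :: "nat \<Rightarrow> nat \<Rightarrow> ('a::zero) mpoly set" where
  "Pd k d = {f \<in> Pk k. homog d f}"

definition hcomp :: "nat \<Rightarrow> ('a::zero) mpoly \<Rightarrow> 'a mpoly" where
  "hcomp d f = Abs_poly_mapping (\<lambda>\<alpha>. if mdeg \<alpha> = d then Poly_Mapping.lookup f \<alpha> else 0)"

definition monom_eval :: "(nat \<Rightarrow> 'a::comm_semiring_1) \<Rightarrow> (nat \<Rightarrow>\<^sub>0 nat) \<Rightarrow> 'a" where
  "monom_eval v \<alpha> = (\<Prod>i\<in>Poly_Mapping.keys \<alpha>. v i ^ Poly_Mapping.lookup \<alpha> i)"

definition eval :: "(nat \<Rightarrow> 'a::comm_semiring_1) \<Rightarrow> 'a mpoly \<Rightarrow> 'a" where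
  "eval v f = (\<Sum>\<alpha>\<in>Poly_Mapping.keys f. Poly_Mapping.lookup f \<alpha> * monom_eval v \<alpha>)"

definition const :: "'a::zero \<Rightarrow> 'a mpoly" where
  "const c = Poly_Mapping.single 0 c"

text \<open>The points p_0..p_(n-1) are given by coordinate vectors v i (i < n), coordinates
  v i 0 .. v i (k-1).\<close>
definition vanish_ideal :: "nat \<Rightarrow> nat \<Rightarrow> (nat \<Rightarrow> nat \<Rightarrow> 'a::comm_ring_1) \<Rightarrow> 'a mpoly set" where
  "vanish_ideal k n v = {f \<in> Pk k. \<forall>d. \<forall>i<n. eval (v i) (hcomp d f) = 0}"

text \<open>R_d = P_d / (I_X)_d as a quotient set; over the finite field F_q, dim R_d = n iff
  |R_d| = q^n.\<close>
definition Rdeg :: "nat \<Rightarrow> nat \<Rightarrow> (nat \<Rightarrow> nat \<Rightarrow> 'a::comm_ring_1) \<Rightarrow> nat \<Rightarrow> 'a mpoly set set" where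
  "Rdeg k n v d = Pd k d // {(f, g). f \<in> Pd k d \<and> g \<in> Pd k d \<and> f - g \<in> vanish_ideal k n v}"

definition reg_index :: "nat \<Rightarrow> nat \<Rightarrow> (nat \<Rightarrow> nat \<Rightarrow> 'a::{comm_ring_1,finite}) \<Rightarrow> nat" where
  "reg_index k n v = (LEAST i. card (Rdeg k n v i) = card (UNIV :: 'a set) ^ n)"

definition separator :: "nat \<Rightarrow> nat \<Rightarrow> (nat \<Rightarrow> nat \<Rightarrow> 'a::{comm_ring_1,finite}) \<Rightarrow> nat \<Rightarrow> 'a mpoly" where
  "separator k n v i = (SOME F. F \<in> Pd k (reg_index k n v) \<and>
      (\<forall>j<n. eval (v j) F = (if j = i then 1 else 0)))"

text \<open>Representatives in P of the elements of the subalgebra F_q[l] of R generated by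
  the class l of L.\<close>
definition FL :: "nat \<Rightarrow> nat \<Rightarrow> (nat \<Rightarrow> nat \<Rightarrow> 'a::comm_ring_1) \<Rightarrow> 'a mpoly \<Rightarrow> 'a mpoly set" where
  "FL k n v L = {f \<in> Pk k. \<exists>m c. f - (\<Sum>j\<le>m. const (c j) * L ^ j) \<in> vanish_ideal k n v}"

text \<open>Lifts to P of F_q[l]-linear maps R -> F_q[l]: a map on representatives, well defined
  modulo I_X, with values in F_q[l], additive and F_q[l]-linear modulo I_X.\<close>
definition is_FL_hom :: "nat \<Rightarrow> nat \<Rightarrow> (nat \<Rightarrow> nat \<Rightarrow> 'a::comm_ring_1) \<Rightarrow> 'a mpoly
    \<Rightarrow> ('a mpoly \<Rightarrow> 'a mpoly) \<Rightarrow> bool" where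
  "is_FL_hom k n v L \<phi> \<longleftrightarrow>
     (\<forall>f\<in>Pk k. \<phi> f \<in> FL k n v L) \<and>
     (\<forall>f\<in>Pk k. \<forall>g\<in>Pk k. f - g \<in> vanish_ideal k n v \<longrightarrow> \<phi> f - \<phi> g \<in> vanish_ideal k n v) \<and>
     (\<forall>f\<in>Pk k. \<forall>g\<in>Pk k. \<phi> (f + g) - (\<phi> f + \<phi> g) \<in> vanish_ideal k n v) \<and>
     (\<forall>a\<in>FL k n v L. \<forall>f\<in>Pk k. \<phi> (a * f) - a * \<phi> f \<in> vanish_ideal k n v)"

text \<open>The preimage in P of the canonical ideal J_(R/F_q[l]) = { sum_i phi(f_i) f_i }.\<close>
definition canon_hat :: "nat \<Rightarrow> nat \<Rightarrow> (nat \<Rightarrow> nat \<Rightarrow> 'a::{comm_ring_1,finite}) \<Rightarrow> 'a mpoly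
    \<Rightarrow> 'a mpoly set" where
  "canon_hat k n v L = {g \<in> Pk k. \<exists>\<phi>. is_FL_hom k n v L \<phi> \<and>
      g - (\<Sum>i<n. \<phi> (separator k n v i) * separator k n v i) \<in> vanish_ideal k n v}"

text \<open>The divided-power module D: an element sum_beta c_beta pi^[beta] is represented by
  its finitely supported coefficient function beta |-> c_beta (monomials in x_0..x_(k-1)).\<close>
definition Dmod :: "nat \<Rightarrow> ((nat \<Rightarrow>\<^sub>0 nat) \<Rightarrow> 'a::zero) set" where
  "Dmod k = {\<psi>. finite {\<beta>. \<psi> \<beta> \<noteq> 0} \<and> (\<forall>\<beta>. \<psi> \<beta> \<noteq> 0 \<longrightarrow> Poly_Mapping.keys \<beta> \<subseteq> {..<k})}"

text \<open>Contraction f o psi:  (f o psi)(x^gamma) = psi(f x^gamma) (bilinear extension).\<close>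
definition contract :: "'a::comm_semiring_1 mpoly \<Rightarrow> ((nat \<Rightarrow>\<^sub>0 nat) \<Rightarrow> 'a)
    \<Rightarrow> ((nat \<Rightarrow>\<^sub>0 nat) \<Rightarrow> 'a)" where
  "contract f \<psi> = (\<lambda>\<gamma>. \<Sum>\<alpha>\<in>Poly_Mapping.keys f. Poly_Mapping.lookup f \<alpha> * \<psi> (\<alpha> + \<gamma>))"

definition perp :: "nat \<Rightarrow> 'a::comm_semiring_1 mpoly set \<Rightarrow> ((nat \<Rightarrow>\<^sub>0 nat) \<Rightarrow> 'a) set" where
  "perp k J = {\<psi> \<in> Dmod k. \<forall>f\<in>J. contract f \<psi> = (\<lambda>_. 0)}"

definition PhiX :: "nat \<Rightarrow> nat \<Rightarrow> (nat \<Rightarrow> nat \<Rightarrow> 'a::{comm_ring_1,finite})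
    \<Rightarrow> ((nat \<Rightarrow>\<^sub>0 nat) \<Rightarrow> 'a)" where
  "PhiX k n v = (\<lambda>\<alpha>. if Poly_Mapping.keys \<alpha> \<subseteq> {..<k} \<and> mdeg \<alpha> = 2 * reg_index k n v - 1
       then (\<Sum>i<n. \<Prod>j<k. v i j ^ Poly_Mapping.lookup \<alpha> j) else 0)"

end

theory Submission
  imports Defs "HOL-Library.FuncSet"
begin

text \<open>Everything runs through the trace form \<open>(f, h) \<mapsto> \<Sum>\<^sub>i f(v\<^sub>i) h(v\<^sub>i)\<close>.
  A homomorphism \<open>\<phi> : R \<rightarrow> \<bbbF>\<^sub>q[\<ell>]\<close> is pinned down by the \<open>\<ell>\<close>-expansions of the \<open>\<phi>(f\<^sub>i)\<close>, and
  \<open>\<bbbF>\<^sub>q[\<ell>]\<close>-linearity applied to \<open>\<ell>\<^sup>r\<^sup>-\<^sup>e h \<equiv> \<Sum>\<^sub>i h(v\<^sub>i) f\<^sub>i\<close> shows that a form \<open>g\<close> of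
  degree \<open>d\<close> in the preimage \<open>\<J>\<close> of the canonical ideal is trace orthogonal to \<open>P\<^sub>2\<^sub>r\<^sub>-\<^sub>1\<^sub>-\<^sub>d\<close>
  (no condition when \<open>d \<ge> 2r\<close>); conversely, for such \<open>g\<close> the trace itself defines a suitable \<open>\<phi>\<close>. In degree \<open>2r - 1\<close> this is orthogonality to the constants,
  which is (a). Pairing \<open>f\<close> with \<open>\<Phi>\<close> is the trace of the degree \<open>2r - 1\<close> part of \<open>f\<close>, so the
  contractions \<open>f \<circ> \<Phi>\<close> annihilate \<open>\<J>\<close>. Conversely, an element of \<open>\<J>\<^sup>\<bottom>\<close> vanishes above
  degree \<open>2r - 1\<close>, and in each degree \<open>D\<close> it annihilates the trace-orthogonal complement of
  \<open>P\<^sub>2\<^sub>r\<^sub>-\<^sub>1\<^sub>-\<^sub>D\<close>, so by finite-dimensional duality it is the trace against a form of degree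
  \<open>2r - 1 - D\<close>; the sum of these forms is the required \<open>f\<close>. Finally \<open>\<Phi> \<noteq> 0\<close> because it pairs
  to \<open>1\<close> with \<open>\<ell>\<^sup>r\<^sup>-\<^sup>1 f\<^sub>1\<close>.\<close>

lemma poly_mapping_expand:
  assumes "finite S" "Poly_Mapping.keys f \<subseteq> S"
  shows "f = (\<Sum>\<alpha>\<in>S. Poly_Mapping.single \<alpha> (Poly_Mapping.lookup f \<alpha>))"
proof (rule poly_mapping_eqI)
  fix \<beta>
  have "Poly_Mapping.lookup (\<Sum>\<alpha>\<in>S. Poly_Mapping.single \<alpha> (Poly_Mapping.lookup f \<alpha>)) \<beta>
     = (if \<beta> \<in> S then Poly_Mapping.lookup f \<beta> else 0)"
    using assms(1) by (simp add: lookup_sum lookup_single when_def sum.delta)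
  then show "Poly_Mapping.lookup f \<beta> = Poly_Mapping.lookup (\<Sum>\<alpha>\<in>S. Poly_Mapping.single \<alpha> (Poly_Mapping.lookup f \<alpha>)) \<beta>"
    using assms(2) by (auto simp: in_keys_iff)
qed

lemma keys_add_nat: "Poly_Mapping.keys (\<alpha> + \<beta> :: nat \<Rightarrow>\<^sub>0 nat) = Poly_Mapping.keys \<alpha> \<union> Poly_Mapping.keys \<beta>"
  by (auto simp: in_keys_iff lookup_add)

lemma monom_eval_superset:
  assumes "finite S" "Poly_Mapping.keys \<alpha> \<subseteq> S"
  shows "monom_eval v \<alpha> = (\<Prod>i\<in>S. v i ^ Poly_Mapping.lookup \<alpha> i)"
  unfolding monom_eval_def
  by (rule prod.mono_neutral_left) (use assms in \<open>auto simp: in_keys_iff\<close>)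

lemma mdeg_superset:
  assumes "finite S" "Poly_Mapping.keys \<alpha> \<subseteq> S"
  shows "mdeg \<alpha> = (\<Sum>i\<in>S. Poly_Mapping.lookup \<alpha> i)"
  unfolding mdeg_def
  by (rule sum.mono_neutral_left) (use assms in \<open>auto simp: in_keys_iff\<close>)

lemma monom_eval_add: "monom_eval v (\<alpha> + \<beta>) = monom_eval v \<alpha> * monom_eval v \<beta>"
proof -
  let ?S = "Poly_Mapping.keys \<alpha> \<union> Poly_Mapping.keys \<beta>"
  have "monom_eval v (\<alpha> + \<beta>) = (\<Prod>i\<in>?S. v i ^ Poly_Mapping.lookup \<alpha> i) * (\<Prod>i\<in>?S. v i ^ Poly_Mapping.lookup \<beta> i)"
    by (subst monom_eval_superset[of ?S]) (auto simp: keys_add_nat lookup_add power_add prod.distrib)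
  then show ?thesis
    by (simp add: monom_eval_superset[symmetric])
qed

lemma monom_eval_0 [simp]: "monom_eval v 0 = 1"
  by (simp add: monom_eval_def)

lemma mdeg_add: "mdeg (\<alpha> + \<beta>) = mdeg \<alpha> + mdeg \<beta>"
proof -
  let ?S = "Poly_Mapping.keys \<alpha> \<union> Poly_Mapping.keys \<beta>"
  have "mdeg (\<alpha> + \<beta>) = (\<Sum>i\<in>?S. Poly_Mapping.lookup \<alpha> i) + (\<Sum>i\<in>?S. Poly_Mapping.lookup \<beta> i)"
    by (subst mdeg_superset[of ?S]) (auto simp: keys_add_nat lookup_add sum.distrib)
  then show ?thesis
    by (simp add: mdeg_superset[symmetric])
qed

lemma lookup_le_mdeg: "Poly_Mapping.lookup \<alpha> i \<le> mdeg \<alpha>"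
proof (cases "i \<in> Poly_Mapping.keys \<alpha>")
  case True
  then show ?thesis unfolding mdeg_def
    by (intro member_le_sum) auto
qed (simp add: in_keys_iff)

lemma mdeg_eq_0: "mdeg \<alpha> = 0 \<Longrightarrow> \<alpha> = 0"
  by (metis le_zero_eq lookup_le_mdeg lookup_zero poly_mapping_eqI)

lemma eval_superset:
  assumes "finite S" "Poly_Mapping.keys f \<subseteq> S"
  shows "eval v f = (\<Sum>\<alpha>\<in>S. Poly_Mapping.lookup f \<alpha> * monom_eval v \<alpha>)"
  unfolding eval_def
  by (rule sum.mono_neutral_left) (use assms in \<open>auto simp: in_keys_iff\<close>)

lemma eval_add: "eval v (f + g) = eval v f + eval v g"
proof -
  let ?S = "Poly_Mapping.keys f \<union> Poly_Mapping.keys g"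
  have "eval v (f + g) = (\<Sum>\<alpha>\<in>?S. Poly_Mapping.lookup f \<alpha> * monom_eval v \<alpha>) + (\<Sum>\<alpha>\<in>?S. Poly_Mapping.lookup g \<alpha> * monom_eval v \<alpha>)"
    by (subst eval_superset[of ?S]) (auto simp: in_keys_iff lookup_add distrib_right sum.distrib)
  then show ?thesis
    by (simp add: eval_superset[symmetric])
qed

lemma eval_zero [simp]: "eval v 0 = 0"
  by (simp add: eval_def)

lemma eval_diff: "eval v (f - g) = eval v f - eval v (g :: 'a::comm_ring_1 mpoly)"
proof -
  have "eval v (- g) = - eval v g"
    by (simp add: eval_def sum_negf)
  then show ?thesis
    using eval_add[of v f "- g"] by simp
qed

lemma eval_sum: "eval v (\<Sum>i\<in>A. f i) = (\<Sum>i\<in>A. eval v (f i))"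
  by (induction A rule: infinite_finite_induct) (auto simp: eval_add)

lemma eval_single [simp]: "eval v (Poly_Mapping.single \<alpha> c) = c * monom_eval v \<alpha>"
  by (simp add: eval_def)

lemma times_poly_mapping_expand:
  fixes f g :: "'a::comm_semiring_1 mpoly"
  shows "f * g = (\<Sum>\<alpha>\<in>Poly_Mapping.keys f. \<Sum>\<beta>\<in>Poly_Mapping.keys g.
            Poly_Mapping.single (\<alpha> + \<beta>) (Poly_Mapping.lookup f \<alpha> * Poly_Mapping.lookup g \<beta>))"
proof -
  have "f * g = (\<Sum>\<alpha>\<in>Poly_Mapping.keys f. Poly_Mapping.single \<alpha> (Poly_Mapping.lookup f \<alpha>)) *
                (\<Sum>\<beta>\<in>Poly_Mapping.keys g. Poly_Mapping.single \<beta> (Poly_Mapping.lookup g \<beta>))"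
    by (simp flip: poly_mapping_expand)
  then show ?thesis
    by (simp add: sum_product mult_single)
qed

lemma eval_mult: "eval v (f * g) = eval v f * eval v (g :: 'a::comm_semiring_1 mpoly)"
proof -
  have "eval v (f * g) = (\<Sum>\<alpha>\<in>Poly_Mapping.keys f. \<Sum>\<beta>\<in>Poly_Mapping.keys g.
      (Poly_Mapping.lookup f \<alpha> * monom_eval v \<alpha>) * (Poly_Mapping.lookup g \<beta> * monom_eval v \<beta>))"
    by (subst times_poly_mapping_expand) (simp add: eval_sum monom_eval_add ac_simps)
  then show ?thesis
    by (simp add: eval_def sum_product)
qed

lemma eval_one [simp]: "eval v (1 :: 'a::comm_semiring_1 mpoly) = 1"
  by (simp flip: single_one)

lemma eval_power: "eval v (f ^ j) = eval v (f :: 'a::comm_semiring_1 mpoly) ^ j"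
  by (induction j) (auto simp: eval_mult)

lemma eval_prod: "eval v (\<Prod>i\<in>A. f i) = (\<Prod>i\<in>A. eval v (f i :: 'a::comm_semiring_1 mpoly))"
  by (induction A rule: infinite_finite_induct) (auto simp: eval_mult)

lemma eval_const [simp]: "eval v (const c) = c"
  by (simp add: const_def)

lemma monom_eval_var [simp]: "monom_eval v (Poly_Mapping.single t (Suc 0)) = v t"
  by (simp add: monom_eval_def)

lemma lookup_hcomp: "Poly_Mapping.lookup (hcomp d f) \<alpha> = (if mdeg \<alpha> = d then Poly_Mapping.lookup f \<alpha> else 0)"
proof -
  have "finite {\<alpha>. (if mdeg \<alpha> = d then Poly_Mapping.lookup f \<alpha> else 0) \<noteq> 0}"
    by (rule finite_subset[OF _ finite_lookup[of f]]) (simp add: Collect_mono)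
  then show ?thesis
    unfolding hcomp_def by (simp add: lookup_Abs_poly_mapping)
qed

lemma keys_hcomp: "Poly_Mapping.keys (hcomp d f) = {\<alpha>\<in>Poly_Mapping.keys f. mdeg \<alpha> = d}"
  by (auto simp: in_keys_iff lookup_hcomp split: if_splits)

lemma hcomp_add: "hcomp d (f + g) = hcomp d f + hcomp d g"
  by (rule poly_mapping_eqI) (simp add: lookup_hcomp lookup_add)

lemma hcomp_diff: "hcomp d (f - g) = hcomp d f - hcomp d (g :: 'a::ab_group_add mpoly)"
  by (rule poly_mapping_eqI) (simp add: lookup_hcomp lookup_minus)

lemma hcomp_sum: "hcomp d (\<Sum>i\<in>A. f i) = (\<Sum>i\<in>A. hcomp d (f i))"
proof (induction A rule: infinite_finite_induct)
  case empty
  show ?case by (rule poly_mapping_eqI) (simp add: lookup_hcomp)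
qed (auto simp: hcomp_add poly_mapping_eqI lookup_hcomp)

lemma hcomp_single: "hcomp d (Poly_Mapping.single \<alpha> c) = (if mdeg \<alpha> = d then Poly_Mapping.single \<alpha> c else 0)"
  by (rule poly_mapping_eqI) (auto simp: lookup_hcomp lookup_single when_def)

lemma hcomp_expand: "hcomp d f = (\<Sum>\<alpha>\<in>Poly_Mapping.keys f. if mdeg \<alpha> = d then Poly_Mapping.single \<alpha> (Poly_Mapping.lookup f \<alpha>) else 0)"
  by (subst poly_mapping_expand[of "Poly_Mapping.keys f" f]) (simp_all add: hcomp_sum hcomp_single)

lemma eval_hcomp: "eval w (hcomp d f) = (\<Sum>\<alpha>\<in>Poly_Mapping.keys f. if mdeg \<alpha> = d then Poly_Mapping.lookup f \<alpha> * monom_eval w \<alpha> else 0)"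
  by (simp add: hcomp_expand eval_sum if_distrib cong: if_cong)

lemma hcomp_mult:
  fixes f g :: "'a::comm_semiring_1 mpoly"
  shows "hcomp d (f * g) = (\<Sum>d1\<le>d. hcomp d1 f * hcomp (d - d1) g)"
proof -
  let ?T = "\<lambda>\<alpha> \<beta>. Poly_Mapping.single (\<alpha> + \<beta>) (Poly_Mapping.lookup f \<alpha> * Poly_Mapping.lookup g \<beta>)"
  have split: "(if mdeg \<alpha> + mdeg \<beta> = d then ?T \<alpha> \<beta> else 0) =
      (\<Sum>d1\<le>d. if mdeg \<alpha> = d1 \<and> mdeg \<beta> = d - d1 then ?T \<alpha> \<beta> else 0)" for \<alpha> \<beta>
  proof -
    have "(\<Sum>d1\<le>d. if mdeg \<alpha> = d1 \<and> mdeg \<beta> = d - d1 then ?T \<alpha> \<beta> else 0) =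
        (\<Sum>d1\<le>d. if d1 = mdeg \<alpha> then (if mdeg \<alpha> + mdeg \<beta> = d then ?T \<alpha> \<beta> else 0) else 0)"
      by (intro sum.cong) auto
    then show ?thesis by (simp add: sum.delta')
  qed
  have "hcomp d (f * g) = (\<Sum>\<alpha>\<in>Poly_Mapping.keys f. \<Sum>\<beta>\<in>Poly_Mapping.keys g.
          if mdeg \<alpha> + mdeg \<beta> = d then ?T \<alpha> \<beta> else 0)"
    by (subst times_poly_mapping_expand) (simp add: hcomp_sum hcomp_single mdeg_add)
  also have "\<dots> = (\<Sum>d1\<le>d. \<Sum>\<alpha>\<in>Poly_Mapping.keys f. \<Sum>\<beta>\<in>Poly_Mapping.keys g.
          if mdeg \<alpha> = d1 \<and> mdeg \<beta> = d - d1 then ?T \<alpha> \<beta> else 0)"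
    unfolding split by (subst sum.swap, subst (2) sum.swap) (rule refl)
  also have "\<dots> = (\<Sum>d1\<le>d. hcomp d1 f * hcomp (d - d1) g)"
    unfolding hcomp_expand sum_product
    by (intro sum.cong refl) (auto simp: mult_single)
  finally show ?thesis .
qed

lemma homog_iff: "homog d f \<longleftrightarrow> (\<forall>\<alpha>. Poly_Mapping.lookup f \<alpha> \<noteq> 0 \<longrightarrow> mdeg \<alpha> = d)"
  by (auto simp: homog_def in_keys_iff)

lemma Pk_iff: "f \<in> Pk k \<longleftrightarrow> (\<forall>\<alpha>. Poly_Mapping.lookup f \<alpha> \<noteq> 0 \<longrightarrow> Poly_Mapping.keys \<alpha> \<subseteq> {..<k})"
  by (auto simp: Pk_def in_keys_iff)

lemma homog_hcomp: "homog d (hcomp d f)"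
  by (simp add: homog_iff lookup_hcomp)

lemma hcomp_homog_self: "homog d f \<Longrightarrow> hcomp d f = f"
  by (rule poly_mapping_eqI) (auto simp: homog_iff lookup_hcomp)

lemma hcomp_homog_other: "homog d f \<Longrightarrow> d' \<noteq> d \<Longrightarrow> hcomp d' f = 0"
  by (rule poly_mapping_eqI) (auto simp: homog_iff lookup_hcomp)

lemma homog_zero [simp]: "homog d 0"
  by (simp add: homog_def)

lemma homog_add: "homog d f \<Longrightarrow> homog d g \<Longrightarrow> homog d (f + g)"
  unfolding homog_iff lookup_add by (metis add.right_neutral)

lemma homog_diff: "homog d f \<Longrightarrow> homog d g \<Longrightarrow> homog d (f - g :: 'a::ab_group_add mpoly)"
  unfolding homog_iff lookup_minus by (metis diff_self diff_zero)

lemma homog_sum: "(\<And>i. i \<in> A \<Longrightarrow> homog d (f i)) \<Longrightarrow> homog d (\<Sum>i\<in>A. f i)"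
  by (induction A rule: infinite_finite_induct) (auto intro: homog_add)

lemma homog_single: "mdeg \<alpha> = d \<Longrightarrow> homog d (Poly_Mapping.single \<alpha> c)"
  by (auto simp: homog_iff lookup_single when_def)

lemma homog_mult: "homog a f \<Longrightarrow> homog b g \<Longrightarrow> homog (a + b) (f * g :: 'a::comm_semiring_1 mpoly)"
  unfolding homog_def using keys_mult[of f g] by (force simp: mdeg_add)

lemma homog_one: "homog 0 (1 :: 'a::comm_semiring_1 mpoly)"
  by (simp flip: single_one add: homog_single mdeg_def)

lemma homog_const: "homog 0 (const c)"
  by (simp add: const_def homog_single mdeg_def)

lemma homog_power: "homog a f \<Longrightarrow> homog (j * a) (f ^ j :: 'a::comm_semiring_1 mpoly)"
  by (induction j) (auto simp: homog_one dest: homog_mult)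

lemma homog_prod: "(\<And>i. i \<in> A \<Longrightarrow> homog 1 (f i)) \<Longrightarrow> homog (card A) (\<Prod>i\<in>A. f i :: 'a::comm_semiring_1 mpoly)"
proof (induction A rule: infinite_finite_induct)
  case (insert x F)
  then show ?case using homog_mult[of 1 "f x" "card F" "prod f F"] by simp
qed (auto simp: homog_one)

lemma eval_homog_0: "homog 0 f \<Longrightarrow> eval v f = Poly_Mapping.lookup f 0"
  using eval_superset[of "{0}" f v] by (force simp: homog_def dest: mdeg_eq_0)

lemma Pk_zero [simp]: "0 \<in> Pk k"
  by (simp add: Pk_def)

lemma Pk_add: "f \<in> Pk k \<Longrightarrow> g \<in> Pk k \<Longrightarrow> f + g \<in> Pk k"
  unfolding Pk_iff lookup_add by (metis add.right_neutral)

lemma Pk_diff: "f \<in> Pk k \<Longrightarrow> g \<in> Pk k \<Longrightarrow> f - g \<in> Pk k"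
  for f :: "'a::ab_group_add mpoly"
  unfolding Pk_iff lookup_minus by (metis diff_self diff_zero)

lemma Pk_sum: "(\<And>i. i \<in> A \<Longrightarrow> f i \<in> Pk k) \<Longrightarrow> (\<Sum>i\<in>A. f i) \<in> Pk k"
  by (induction A rule: infinite_finite_induct) (auto intro: Pk_add)

lemma Pk_single: "Poly_Mapping.keys \<alpha> \<subseteq> {..<k} \<Longrightarrow> Poly_Mapping.single \<alpha> c \<in> Pk k"
  by (auto simp: Pk_iff lookup_single when_def)

lemma Pk_mult: "f \<in> Pk k \<Longrightarrow> g \<in> Pk k \<Longrightarrow> f * g \<in> Pk k"
  for f :: "'a::comm_semiring_1 mpoly"
  unfolding Pk_def using keys_mult[of f g] by (force simp: keys_add_nat)

lemma Pk_one: "(1 :: 'a::comm_semiring_1 mpoly) \<in> Pk k"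
  by (simp flip: single_one add: Pk_single)

lemma Pk_const: "const c \<in> Pk k"
  by (simp add: const_def Pk_single)

lemma Pk_power: "f \<in> Pk k \<Longrightarrow> f ^ j \<in> Pk k"
  for f :: "'a::comm_semiring_1 mpoly"
  by (induction j) (auto simp: Pk_one Pk_mult)

lemma Pk_prod: "(\<And>i. i \<in> A \<Longrightarrow> f i \<in> Pk k) \<Longrightarrow> (\<Prod>i\<in>A. f i) \<in> Pk k"
  for f :: "_ \<Rightarrow> 'a::comm_semiring_1 mpoly"
  by (induction A rule: infinite_finite_induct) (auto intro: Pk_mult simp: Pk_one)

lemma Pk_hcomp: "f \<in> Pk k \<Longrightarrow> hcomp d f \<in> Pk k"
  by (auto simp: Pk_def keys_hcomp)

lemma hcomp_Pd: "f \<in> Pk k \<Longrightarrow> hcomp d f \<in> Pd k d"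
  by (simp add: Pd_def Pk_hcomp homog_hcomp)

lemma finite_monomials_deg_le: "finite {\<beta> :: nat \<Rightarrow>\<^sub>0 nat. Poly_Mapping.keys \<beta> \<subseteq> {..<k} \<and> mdeg \<beta> \<le> B}"
proof -
  define S where "S = {\<beta> :: nat \<Rightarrow>\<^sub>0 nat. Poly_Mapping.keys \<beta> \<subseteq> {..<k} \<and> mdeg \<beta> \<le> B}"
  define F where "F = {h. \<forall>x. (x \<in> {..<k} \<longrightarrow> h x \<in> {..B}) \<and> (x \<notin> {..<k} \<longrightarrow> h x = (0::nat))}"
  have "finite F" unfolding F_def by (rule finite_set_of_finite_funs) auto
  moreover have "Poly_Mapping.lookup ` S \<subseteq> F"
  proof (rule image_subsetI)
    fix \<beta> assume "\<beta> \<in> S"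
    then have "Poly_Mapping.lookup \<beta> x \<in> {..B}" "x \<notin> {..<k} \<Longrightarrow> Poly_Mapping.lookup \<beta> x = 0" for x
      using lookup_le_mdeg[of \<beta> x] by (auto simp: S_def in_keys_iff)
    then show "Poly_Mapping.lookup \<beta> \<in> F" unfolding F_def by blast
  qed
  ultimately have "finite (Poly_Mapping.lookup ` S)" by (rule finite_subset[rotated])
  moreover have "inj_on Poly_Mapping.lookup S"
    by (rule inj_onI) simp
  ultimately show ?thesis unfolding S_def[symmetric] by (rule finite_imageD)
qed

definition monomials :: "nat \<Rightarrow> nat \<Rightarrow> (nat \<Rightarrow>\<^sub>0 nat) set" where
  "monomials k D = {\<beta>. Poly_Mapping.keys \<beta> \<subseteq> {..<k} \<and> mdeg \<beta> = D}"

lemma finite_monomials: "finite (monomials k D)"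
  unfolding monomials_def by (rule finite_subset[OF _ finite_monomials_deg_le[of k D]]) auto

section \<open>Double annihilators in finite dimension\<close>

definition orthogonal_to_annihilator :: "'m set \<Rightarrow> 'h set \<Rightarrow> ('m \<Rightarrow> 'h \<Rightarrow> 'a::field) \<Rightarrow> ('m \<Rightarrow> 'a) \<Rightarrow> bool" where
  "orthogonal_to_annihilator M H B \<psi> \<longleftrightarrow>
     (\<forall>a. (\<forall>h\<in>H. (\<Sum>\<beta>\<in>M. a \<beta> * B \<beta> h) = 0) \<longrightarrow> (\<Sum>\<beta>\<in>M. a \<beta> * \<psi> \<beta>) = 0)"

text \<open>Gaussian elimination on the pivot entry \<open>B \<beta>\<^sub>0 h\<^sub>0\<close>: the next two lemmas pass between the
  system and the one with row \<open>\<beta>\<^sub>0\<close> and column \<open>h\<^sub>0\<close> eliminated.\<close>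

lemma orthogonal_to_annihilator_pivot:
  fixes B :: "'m \<Rightarrow> 'h \<Rightarrow> 'a::field"
  assumes fin: "finite M" and \<beta>0: "\<beta>0 \<in> M" and p: "B \<beta>0 h0 \<noteq> 0"
    and orth: "orthogonal_to_annihilator M (insert h0 H) B \<psi>"
  shows "orthogonal_to_annihilator (M - {\<beta>0}) H
           (\<lambda>\<beta> h. B \<beta> h - B \<beta> h0 / B \<beta>0 h0 * B \<beta>0 h) (\<lambda>\<beta>. \<psi> \<beta> - B \<beta> h0 / B \<beta>0 h0 * \<psi> \<beta>0)"
  unfolding orthogonal_to_annihilator_def
proof (intro allI impI)
  fix a' assume a': "\<forall>h\<in>H. (\<Sum>\<beta>\<in>M - {\<beta>0}. a' \<beta> * (B \<beta> h - B \<beta> h0 / B \<beta>0 h0 * B \<beta>0 h)) = 0"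
  define S0 where "S0 = (\<Sum>\<beta>\<in>M - {\<beta>0}. a' \<beta> * B \<beta> h0)"
  define a where "a = a'(\<beta>0 := - S0 / B \<beta>0 h0)"
  have extend: "(\<Sum>\<beta>\<in>M. a \<beta> * X \<beta>) = - S0 / B \<beta>0 h0 * X \<beta>0 + (\<Sum>\<beta>\<in>M - {\<beta>0}. a' \<beta> * X \<beta>)" for X
  proof -
    have "(\<Sum>\<beta>\<in>M - {\<beta>0}. a \<beta> * X \<beta>) = (\<Sum>\<beta>\<in>M - {\<beta>0}. a' \<beta> * X \<beta>)"
      by (intro sum.cong) (auto simp: a_def)
    then show ?thesis
      using sum.remove[OF fin \<beta>0, of "\<lambda>\<beta>. a \<beta> * X \<beta>"] by (simp add: a_def)
  qed
  have reduce: "(\<Sum>\<beta>\<in>M - {\<beta>0}. a' \<beta> * (X \<beta> - B \<beta> h0 / B \<beta>0 h0 * c))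
      = (\<Sum>\<beta>\<in>M - {\<beta>0}. a' \<beta> * X \<beta>) - S0 / B \<beta>0 h0 * c" for X c
  proof -
    have "(\<Sum>\<beta>\<in>M - {\<beta>0}. a' \<beta> * (X \<beta> - B \<beta> h0 / B \<beta>0 h0 * c))
        = (\<Sum>\<beta>\<in>M - {\<beta>0}. a' \<beta> * X \<beta> - (a' \<beta> * B \<beta> h0) * (c / B \<beta>0 h0))"
      by (intro sum.cong) (auto simp: algebra_simps)
    also have "\<dots> = (\<Sum>\<beta>\<in>M - {\<beta>0}. a' \<beta> * X \<beta>) - S0 * (c / B \<beta>0 h0)"
      by (simp only: sum_subtractf S0_def sum_distrib_right)
    finally show ?thesis by simp
  qed
  have "(\<Sum>\<beta>\<in>M. a \<beta> * B \<beta> h) = 0" if "h \<in> insert h0 H" for h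
  proof (cases "h = h0")
    case True
    then show ?thesis unfolding extend using p by (simp add: S0_def)
  next
    case False
    then show ?thesis
      using a' that reduce[of "\<lambda>\<beta>. B \<beta> h" "B \<beta>0 h"] unfolding extend by simp
  qed
  then have "(\<Sum>\<beta>\<in>M. a \<beta> * \<psi> \<beta>) = 0"
    using orth unfolding orthogonal_to_annihilator_def by blast
  then show "(\<Sum>\<beta>\<in>M - {\<beta>0}. a' \<beta> * (\<psi> \<beta> - B \<beta> h0 / B \<beta>0 h0 * \<psi> \<beta>0)) = 0"
    unfolding reduce extend by simp
qed

lemma lincomb_pivot_lift:
  fixes B :: "'m \<Rightarrow> 'h \<Rightarrow> 'a::field"
  assumes \<beta>0: "\<beta>0 \<in> M" and p: "B \<beta>0 h0 \<noteq> 0" and H: "finite H" "h0 \<notin> H"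
    and b': "\<forall>\<beta>\<in>M - {\<beta>0}. \<psi> \<beta> - B \<beta> h0 / B \<beta>0 h0 * \<psi> \<beta>0
               = (\<Sum>h\<in>H. b' h * (B \<beta> h - B \<beta> h0 / B \<beta>0 h0 * B \<beta>0 h))"
  shows "\<exists>b. \<forall>\<beta>\<in>M. \<psi> \<beta> = (\<Sum>h\<in>insert h0 H. b h * B \<beta> h)"
proof -
  define T where "T \<beta> = (\<Sum>h\<in>H. b' h * B \<beta> h)" for \<beta>
  define b where "b = b'(h0 := (\<psi> \<beta>0 - T \<beta>0) / B \<beta>0 h0)"
  have b_sum: "(\<Sum>h\<in>insert h0 H. b h * B \<beta> h) = (\<psi> \<beta>0 - T \<beta>0) / B \<beta>0 h0 * B \<beta> h0 + T \<beta>" for \<beta>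
  proof -
    have "(\<Sum>h\<in>H. b h * B \<beta> h) = T \<beta>"
      unfolding T_def b_def using H by (intro sum.cong) auto
    then show ?thesis
      using H by (simp add: b_def)
  qed
  have "\<psi> \<beta> = (\<Sum>h\<in>insert h0 H. b h * B \<beta> h)" if \<beta>: "\<beta> \<in> M" for \<beta>
  proof (cases "\<beta> = \<beta>0")
    case True
    then show ?thesis unfolding b_sum using p by simp
  next
    case False
    have "(\<Sum>h\<in>H. b' h * (B \<beta> h - B \<beta> h0 / B \<beta>0 h0 * B \<beta>0 h)) = T \<beta> - B \<beta> h0 / B \<beta>0 h0 * T \<beta>0"
      unfolding T_def by (simp add: right_diff_distrib sum_subtractf sum_distrib_left mult_ac)
    then have "\<psi> \<beta> - B \<beta> h0 / B \<beta>0 h0 * \<psi> \<beta>0 = T \<beta> - B \<beta> h0 / B \<beta>0 h0 * T \<beta>0"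
      using b' \<beta> False by simp
    then show ?thesis unfolding b_sum using p by (simp add: field_simps)
  qed
  then show ?thesis by blast
qed

lemma lincomb_if_orthogonal_to_annihilator:
  fixes B :: "'m \<Rightarrow> 'h \<Rightarrow> 'a::field"
  assumes "finite H" "finite M" "orthogonal_to_annihilator M H B \<psi>"
  shows "\<exists>b. \<forall>\<beta>\<in>M. \<psi> \<beta> = (\<Sum>h\<in>H. b h * B \<beta> h)"
  using assms
proof (induction H arbitrary: M B \<psi> rule: finite_induct)
  case empty
  have "\<psi> \<beta> = 0" if "\<beta> \<in> M" for \<beta>
  proof -
    have "(\<Sum>x\<in>M. (if x = \<beta> then 1 else 0) * \<psi> x) = 0"
      using empty.prems(2) unfolding orthogonal_to_annihilator_def by simp
    moreover have "(\<Sum>x\<in>M. (if x = \<beta> then 1 else 0) * \<psi> x) = (\<Sum>x\<in>M. if x = \<beta> then \<psi> x else 0)"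
      by (intro sum.cong) auto
    ultimately show ?thesis
      using that empty.prems(1) by (simp add: sum.delta)
  qed
  then show ?case by simp
next
  case (insert h0 H)
  show ?case
  proof (cases "\<forall>\<beta>\<in>M. B \<beta> h0 = 0")
    case True
    then have "orthogonal_to_annihilator M H B \<psi>"
      using insert.prems(2) unfolding orthogonal_to_annihilator_def by auto
    then obtain b where "\<forall>\<beta>\<in>M. \<psi> \<beta> = (\<Sum>h\<in>H. b h * B \<beta> h)"
      using insert.IH insert.prems(1) by blast
    then show ?thesis
      using True insert.hyps by auto
  next
    case False
    then obtain \<beta>0 where \<beta>0: "\<beta>0 \<in> M" and p: "B \<beta>0 h0 \<noteq> 0" by blast
    obtain b' where "\<forall>\<beta>\<in>M - {\<beta>0}. \<psi> \<beta> - B \<beta> h0 / B \<beta>0 h0 * \<psi> \<beta>0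
        = (\<Sum>h\<in>H. b' h * (B \<beta> h - B \<beta> h0 / B \<beta>0 h0 * B \<beta>0 h))"
      using insert.IH[of "M - {\<beta>0}"] insert.prems
        orthogonal_to_annihilator_pivot[OF insert.prems(1) \<beta>0 p insert.prems(2)] by blast
    then show ?thesis
      by (rule lincomb_pivot_lift[where B=B, OF \<beta>0 p insert.hyps])
  qed
qed

definition pairing :: "'a::comm_semiring_1 mpoly \<Rightarrow> ((nat \<Rightarrow>\<^sub>0 nat) \<Rightarrow> 'a) \<Rightarrow> 'a" where
  "pairing g \<psi> = (\<Sum>\<alpha>\<in>Poly_Mapping.keys g. Poly_Mapping.lookup g \<alpha> * \<psi> \<alpha>)"

lemma pairing_superset:
  "finite S \<Longrightarrow> Poly_Mapping.keys g \<subseteq> S \<Longrightarrow> pairing g \<psi> = (\<Sum>\<alpha>\<in>S. Poly_Mapping.lookup g \<alpha> * \<psi> \<alpha>)"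
  unfolding pairing_def by (rule sum.mono_neutral_left) (auto simp: in_keys_iff)

lemma pairing_add: "pairing (f + g) \<psi> = pairing f \<psi> + pairing g \<psi>"
proof -
  let ?S = "Poly_Mapping.keys f \<union> Poly_Mapping.keys g"
  have "pairing (f + g) \<psi> = (\<Sum>\<alpha>\<in>?S. Poly_Mapping.lookup f \<alpha> * \<psi> \<alpha>) + (\<Sum>\<alpha>\<in>?S. Poly_Mapping.lookup g \<alpha> * \<psi> \<alpha>)"
    by (subst pairing_superset[of ?S]) (auto simp: in_keys_iff lookup_add distrib_right sum.distrib)
  then show ?thesis
    by (simp add: pairing_superset[symmetric])
qed

lemma pairing_sum: "pairing (\<Sum>i\<in>A. f i) \<psi> = (\<Sum>i\<in>A. pairing (f i) \<psi>)"
  by (induction A rule: infinite_finite_induct) (simp_all add: pairing_add, simp_all add: pairing_def)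

lemma pairing_single [simp]: "pairing (Poly_Mapping.single \<alpha> c) \<psi> = c * \<psi> \<alpha>"
  by (simp add: pairing_def)

lemma contract_eq_pairing: "contract g \<psi> \<gamma> = pairing (g * Poly_Mapping.single \<gamma> 1) \<psi>"
  by (subst times_poly_mapping_expand) (simp add: pairing_sum contract_def)

lemma pairing_contract: "pairing g (contract f \<psi>) = pairing (g * f) \<psi>"
proof -
  have "pairing (g * f) \<psi> = (\<Sum>\<beta>\<in>Poly_Mapping.keys g. \<Sum>\<alpha>\<in>Poly_Mapping.keys f.
           Poly_Mapping.lookup g \<beta> * (Poly_Mapping.lookup f \<alpha> * \<psi> (\<alpha> + \<beta>)))"
    by (subst times_poly_mapping_expand) (simp add: pairing_sum add.commute mult_ac)
  then show ?thesis
    by (simp add: pairing_def contract_def sum_distrib_left)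
qed

lemma contract_superset:
  "finite S \<Longrightarrow> Poly_Mapping.keys g \<subseteq> S \<Longrightarrow> contract g \<psi> \<gamma> = (\<Sum>\<alpha>\<in>S. Poly_Mapping.lookup g \<alpha> * \<psi> (\<alpha> + \<gamma>))"
  unfolding contract_def by (rule sum.mono_neutral_left) (auto simp: in_keys_iff)

locale normalized_points =
  fixes k n :: nat and v :: "nat \<Rightarrow> nat \<Rightarrow> 'a::{field,finite}" and L :: "'a mpoly"
  assumes two_le_n: "n \<ge> 2"
    and points_distinct: "\<forall>i<n. \<forall>j<n. i \<noteq> j \<longrightarrow> (\<exists>t<k. v i t \<noteq> v j t)"
    and L_linear: "L \<in> Pd k 1"
    and eval_L: "\<forall>i<n. eval (v i) L = 1"
begin

abbreviation "I \<equiv> vanish_ideal k n v"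

definition eval_comp :: "'a mpoly \<Rightarrow> nat \<Rightarrow> nat \<Rightarrow> 'a" where
  "eval_comp f m d = eval (v m) (hcomp d f)"

lemma vanish_ideal_iff: "f \<in> I \<longleftrightarrow> f \<in> Pk k \<and> (\<forall>m<n. \<forall>d. eval_comp f m d = 0)"
  by (auto simp: vanish_ideal_def eval_comp_def)

lemma eval_comp_add: "eval_comp (f + g) m d = eval_comp f m d + eval_comp g m d"
  by (simp add: eval_comp_def hcomp_add eval_add)

lemma eval_comp_diff: "eval_comp (f - g) m d = eval_comp f m d - eval_comp g m d"
  by (simp add: eval_comp_def hcomp_diff eval_diff)

lemma eval_comp_sum: "eval_comp (\<Sum>i\<in>A. f i) m d = (\<Sum>i\<in>A. eval_comp (f i) m d)"
  by (simp add: eval_comp_def hcomp_sum eval_sum)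

lemma eval_comp_mult: "eval_comp (f * g) m d = (\<Sum>d1\<le>d. eval_comp f m d1 * eval_comp g m (d - d1))"
  by (simp add: eval_comp_def hcomp_mult eval_sum eval_mult)

lemma eval_comp_homog: "homog D f \<Longrightarrow> eval_comp f m d = (if d = D then eval (v m) f else 0)"
  by (simp add: eval_comp_def hcomp_homog_self hcomp_homog_other)

lemma eval_comp_single:
  "eval_comp (Poly_Mapping.single \<alpha> c) m d = (if mdeg \<alpha> = d then c * monom_eval (v m) \<alpha> else 0)"
  by (simp add: eval_comp_def hcomp_single)

lemma eval_comp_sum_homog:
  assumes F: "\<And>D. D \<le> N \<Longrightarrow> homog (N - D) (F D)" and D: "D \<le> N"
  shows "eval_comp (\<Sum>D'\<le>N. F D') m (N - D) = eval (v m) (F D)"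
proof -
  have "eval_comp (\<Sum>D'\<le>N. F D') m (N - D) = (\<Sum>D'\<le>N. if D' = D then eval (v m) (F D') else 0)"
    unfolding eval_comp_sum using D by (intro sum.cong) (auto simp: eval_comp_homog[OF F])
  then show ?thesis
    using D by (simp add: sum.delta')
qed

lemma eval_comp_mult_delta:
  assumes "\<And>d. eval_comp g m d = (if d = e then c else 0)"
  shows "eval_comp (g * f) m d = (if e \<le> d then c * eval_comp f m (d - e) else 0)"
proof -
  have "eval_comp (g * f) m d = (\<Sum>d1\<le>d. if d1 = e then c * eval_comp f m (d - d1) else 0)"
    unfolding eval_comp_mult assms by (intro sum.cong) auto
  then show ?thesis by (simp add: sum.delta)
qed

lemma eval_comp_const_mult: "eval_comp (const c * f) m d = c * eval_comp f m d"
  by (simp add: eval_comp_mult_delta eval_comp_homog[OF homog_const])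

lemma diff_in_vanish_ideal:
  "f \<in> Pk k \<Longrightarrow> g \<in> Pk k \<Longrightarrow> (\<And>m d. m < n \<Longrightarrow> eval_comp f m d = eval_comp g m d) \<Longrightarrow> f - g \<in> I"
  by (simp add: vanish_ideal_iff Pk_diff eval_comp_diff)

lemma eval_comp_eq_if_diff_in_vanish_ideal:
  "f - g \<in> I \<Longrightarrow> m < n \<Longrightarrow> eval_comp f m d = eval_comp g m d"
  by (simp add: vanish_ideal_iff eval_comp_diff)

lemma homog_L: "homog 1 L" and L_Pk: "L \<in> Pk k"
  using L_linear by (auto simp: Pd_def)

lemma eval_L_power: "m < n \<Longrightarrow> eval (v m) (L ^ j) = 1"
  using eval_L by (simp add: eval_power)

lemma eval_comp_L_power: "m < n \<Longrightarrow> eval_comp (L ^ j) m d = (if d = j then 1 else 0)"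
  using homog_power[OF homog_L, of j] by (simp add: eval_comp_homog eval_L_power)

lemma eval_comp_L_power_mult:
  "m < n \<Longrightarrow> eval_comp (L ^ j * f) m d = (if j \<le> d then eval_comp f m (d - j) else 0)"
  by (simp add: eval_comp_mult_delta eval_comp_L_power)

definition max_deg :: "'a mpoly \<Rightarrow> nat" where
  "max_deg f = Max (insert 0 (mdeg ` Poly_Mapping.keys f))"

lemma eval_comp_above_max_deg: "max_deg f < d \<Longrightarrow> eval_comp f m d = 0"
proof -
  assume "max_deg f < d"
  then have "hcomp d f = 0"
    unfolding max_deg_def
    by (intro poly_mapping_eqI) (auto simp: lookup_hcomp in_keys_iff)
  then show ?thesis by (simp add: eval_comp_def)
qed

lemma eval_comp_L_poly:
  "m < n \<Longrightarrow> eval_comp (\<Sum>j\<le>B. const (c j) * L ^ j) m d = (if d \<le> B then c d else 0)"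
  by (simp add: eval_comp_sum eval_comp_const_mult eval_comp_L_power if_distrib sum.delta' cong: if_cong)

lemma L_poly_Pk: "(\<Sum>j\<le>B. const (c j) * L ^ j) \<in> Pk k"
  by (intro Pk_sum Pk_mult Pk_const Pk_power L_Pk)

section \<open>Interpolation and the regularity index\<close>

definition eval_surj :: "nat \<Rightarrow> bool" where
  "eval_surj d \<longleftrightarrow> (\<forall>w. \<exists>f\<in>Pd k d. \<forall>m<n. eval (v m) f = w m)"

lemma eval_surj_mono:
  assumes "eval_surj d" "d \<le> e"
  shows "eval_surj e"
  unfolding eval_surj_def
proof
  fix w
  obtain f where f: "f \<in> Pd k d" "\<forall>m<n. eval (v m) f = w m"
    using assms(1) unfolding eval_surj_def by blast
  have "L ^ (e - d) * f \<in> Pd k e"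
    using f(1) homog_mult[OF homog_power[OF homog_L, of "e - d"], of d f] assms(2)
    by (auto simp: Pd_def Pk_mult Pk_power L_Pk)
  moreover have "\<forall>m<n. eval (v m) (L ^ (e - d) * f) = w m"
    using f(2) by (simp add: eval_mult eval_L_power)
  ultimately show "\<exists>f\<in>Pd k e. \<forall>m<n. eval (v m) f = w m" by blast
qed

lemma not_eval_surj_0: "\<not> eval_surj 0"
proof
  assume "eval_surj 0"
  then have "\<exists>f\<in>Pd k 0. \<forall>m<n. eval (v m) f = (if m = 0 then 1 else 0)"
    unfolding eval_surj_def by (rule spec)
  then obtain f where f: "f \<in> Pd k 0" "\<forall>m<n. eval (v m) f = (if m = 0 then 1 else 0)"
    by blast
  then have "eval (v 0) f = eval (v 1) f" by (simp add: Pd_def eval_homog_0)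
  moreover have "eval (v 0) f = 1" "eval (v 1) f = 0" using f(2) two_le_n by auto
  ultimately show False by simp
qed

lemma separating_linear_form:
  assumes "i < n" "j < n" "i \<noteq> j"
  shows "\<exists>l\<in>Pd k 1. eval (v j) l = 0 \<and> eval (v i) l \<noteq> 0"
proof -
  obtain t where t: "t < k" "v i t \<noteq> v j t"
    using points_distinct assms by blast
  define x where "x = Poly_Mapping.single (Poly_Mapping.single t (1::nat)) (1::'a)"
  have "x \<in> Pd k 1"
    using t by (simp add: x_def Pd_def Pk_single homog_single mdeg_def)
  then have "const (v j t) * L - x \<in> Pd k 1"
    using homog_mult[OF homog_const homog_L, of "v j t"]
    by (auto simp: Pd_def intro!: homog_diff Pk_diff Pk_mult Pk_const L_Pk)
  moreover have "eval (v m) (const (v j t) * L - x) = v j t - v m t" if "m < n" for m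
    using that eval_L by (simp add: x_def eval_diff eval_mult)
  ultimately show ?thesis
    using assms t by (intro bexI[of _ "const (v j t) * L - x"]) auto
qed

lemma point_indicator:
  assumes i: "i < n"
  shows "\<exists>q\<in>Pd k (n - 1). \<forall>m<n. eval (v m) q = (if m = i then 1 else 0)"
proof -
  obtain l where l: "\<And>j. j \<in> {..<n} - {i} \<Longrightarrow> l j \<in> Pd k 1 \<and> eval (v j) (l j) = 0 \<and> eval (v i) (l j) \<noteq> 0"
    using separating_linear_form[OF i] by (metis DiffE insertCI lessThan_iff)
  define p where "p = (\<Prod>j\<in>{..<n} - {i}. l j)"
  have "homog 1 (l j)" "l j \<in> Pk k" if "j \<in> {..<n} - {i}" for j
    using l[OF that] by (auto simp: Pd_def)
  then have "homog (card ({..<n} - {i})) p" "p \<in> Pk k"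
    unfolding p_def by (blast intro: homog_prod Pk_prod)+
  then have "const (1 / eval (v i) p) * p \<in> Pd k (n - 1)"
    using i homog_mult[OF homog_const, of "n - 1" p] by (auto simp: Pd_def Pk_mult Pk_const)
  moreover have "eval (v m) p = 0" if "m < n" "m \<noteq> i" for m
    using that l by (auto simp: p_def eval_prod)
  moreover have "eval (v i) p \<noteq> 0"
    using l by (simp add: p_def eval_prod)
  ultimately show ?thesis
    by (intro bexI[of _ "const (1 / eval (v i) p) * p"]) (auto simp: eval_mult)
qed

lemma eval_surj_n_minus_1: "eval_surj (n - 1)"
  unfolding eval_surj_def
proof
  fix w
  obtain q where q: "\<And>i. i < n \<Longrightarrow> q i \<in> Pd k (n - 1) \<and> (\<forall>m<n. eval (v m) (q i) = (if m = i then 1 else 0))"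
    using point_indicator by metis
  have "(\<Sum>i<n. const (w i) * q i) \<in> Pd k (n - 1)"
    using q homog_mult[OF homog_const, of "n - 1"]
    by (auto simp: Pd_def intro!: Pk_sum Pk_mult Pk_const homog_sum)
  moreover have "eval (v m) (\<Sum>i<n. const (w i) * q i) = w m" if m: "m < n" for m
  proof -
    have "eval (v m) (\<Sum>i<n. const (w i) * q i) = (\<Sum>i<n. if i = m then w m else 0)"
      unfolding eval_sum eval_mult using m q by (intro sum.cong) auto
    then show ?thesis using m by simp
  qed
  ultimately show "\<exists>f\<in>Pd k (n - 1). \<forall>m<n. eval (v m) f = w m" by blast
qed

definition eval_vec :: "'a mpoly \<Rightarrow> nat \<Rightarrow> 'a" where
  "eval_vec f = restrict (\<lambda>m. eval (v m) f) {..<n}"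

lemma diff_in_vanish_ideal_iff_eval_vec:
  assumes "f \<in> Pd k d" "g \<in> Pd k d"
  shows "f - g \<in> I \<longleftrightarrow> eval_vec f = eval_vec g"
proof -
  have "f - g \<in> I \<longleftrightarrow> (\<forall>m<n. \<forall>d'. eval_comp f m d' = eval_comp g m d')"
    using assms eval_comp_eq_if_diff_in_vanish_ideal diff_in_vanish_ideal[of f g]
    unfolding Pd_def by blast
  also have "\<dots> \<longleftrightarrow> (\<forall>m<n. eval (v m) f = eval (v m) g)"
    using assms by (auto simp: Pd_def eval_comp_homog) metis
  also have "\<dots> \<longleftrightarrow> eval_vec f = eval_vec g"
    by (auto simp: eval_vec_def restrict_def fun_eq_iff)
  finally show ?thesis .
qed

lemma card_Rdeg: "card (Rdeg k n v d) = card (eval_vec ` Pd k d)"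
proof -
  define E where "E f = (f \<in> Pd k d, eval_vec f)" for f
  have "{(f, g). f \<in> Pd k d \<and> g \<in> Pd k d \<and> f - g \<in> I} `` {x} = kernel E `` {x}"
    if "x \<in> Pd k d" for x
    using that diff_in_vanish_ideal_iff_eval_vec by (auto simp: kernel_def E_def)
  then have "Rdeg k n v d = Pd k d // kernel E"
    unfolding Rdeg_def quotient_def by simp
  then have "card (Rdeg k n v d) = card (E ` Pd k d)"
    using bij_betw_same_card[OF bij_betw_image_quotient_kernel] by metis
  also have "E ` Pd k d = Pair True ` eval_vec ` Pd k d"
    by (auto simp: E_def)
  finally show ?thesis
    by (simp add: card_image inj_on_def)
qed

lemma eval_surj_iff_eval_vec_onto:
  "eval_surj d \<longleftrightarrow> eval_vec ` Pd k d = {..<n} \<rightarrow>\<^sub>E (UNIV :: 'a set)"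
proof
  assume onto: "eval_vec ` Pd k d = {..<n} \<rightarrow>\<^sub>E (UNIV :: 'a set)"
  show "eval_surj d" unfolding eval_surj_def
  proof
    fix w
    have "restrict w {..<n} \<in> {..<n} \<rightarrow>\<^sub>E (UNIV :: 'a set)" by simp
    then have "restrict w {..<n} \<in> eval_vec ` Pd k d" by (simp only: onto)
    then obtain f where f: "f \<in> Pd k d" "eval_vec f = restrict w {..<n}" by (metis imageE)
    have "eval (v m) f = w m" if "m < n" for m
      using fun_cong[OF f(2), of m] that by (simp add: eval_vec_def)
    then show "\<exists>f\<in>Pd k d. \<forall>m<n. eval (v m) f = w m"
      using f(1) by blast
  qed
next
  assume surj: "eval_surj d"
  show "eval_vec ` Pd k d = {..<n} \<rightarrow>\<^sub>E (UNIV :: 'a set)"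
  proof (rule equalityI)
    show "eval_vec ` Pd k d \<subseteq> {..<n} \<rightarrow>\<^sub>E (UNIV :: 'a set)"
      unfolding eval_vec_def by (intro image_subsetI) simp
  next
    show "{..<n} \<rightarrow>\<^sub>E (UNIV :: 'a set) \<subseteq> eval_vec ` Pd k d"
    proof
      fix w assume w: "w \<in> {..<n} \<rightarrow>\<^sub>E (UNIV :: 'a set)"
      obtain f where f: "f \<in> Pd k d" "\<forall>m<n. eval (v m) f = w m"
        using surj unfolding eval_surj_def by (metis spec[of _ w])
      have "eval_vec f = w" using f(2) w by (auto simp: eval_vec_def PiE_def extensional_def)
      then show "w \<in> eval_vec ` Pd k d" using f(1) by blast
    qed
  qed
qed

text \<open>Over the finite field, \<open>dim R\<^sub>d = n\<close> means \<open>|R\<^sub>d| = q\<^sup>n\<close>, that is, evaluation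
  \<open>P\<^sub>d \<rightarrow> \<bbbF>\<^sub>q\<^sup>n\<close> is onto, since \<open>R\<^sub>d\<close> is its image.\<close>

lemma card_Rdeg_eq_iff: "card (Rdeg k n v d) = card (UNIV :: 'a set) ^ n \<longleftrightarrow> eval_surj d"
proof -
  let ?Q = "{..<n} \<rightarrow>\<^sub>E (UNIV :: 'a set)"
  have "eval_vec ` Pd k d \<subseteq> ?Q"
    unfolding eval_vec_def by (intro image_subsetI) simp
  moreover have "finite ?Q" by (rule finite_PiE) auto
  moreover have "card ?Q = card (UNIV :: 'a set) ^ n" by (simp add: card_PiE)
  ultimately show ?thesis
    unfolding card_Rdeg eval_surj_iff_eval_vec_onto by (metis card_subset_eq)
qed

abbreviation "r \<equiv> reg_index k n v"

lemma eval_surj_reg_index: "eval_surj r"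
  unfolding reg_index_def card_Rdeg_eq_iff by (rule LeastI[where P = eval_surj, OF eval_surj_n_minus_1])

lemma reg_index_pos: "r \<ge> 1"
  using eval_surj_reg_index not_eval_surj_0 by (metis less_one not_le)

lemma eval_surj_ge_reg_index: "r \<le> e \<Longrightarrow> eval_surj e"
  using eval_surj_mono[OF eval_surj_reg_index] .

abbreviation "sep i \<equiv> separator k n v i"

lemma separator: "sep i \<in> Pd k r \<and> (\<forall>m<n. eval (v m) (sep i) = (if m = i then 1 else 0))"
proof -
  have "\<exists>F\<in>Pd k r. \<forall>j<n. eval (v j) F = (if j = i then 1 else 0)"
    using eval_surj_reg_index unfolding eval_surj_def by (rule spec)
  then have "\<exists>F. F \<in> Pd k r \<and> (\<forall>j<n. eval (v j) F = (if j = i then 1 else 0))"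
    by blast
  then show ?thesis
    unfolding separator_def by (rule someI_ex)
qed

lemma separator_Pk: "sep i \<in> Pk k"
  using separator by (auto simp: Pd_def)

lemma eval_comp_separator: "m < n \<Longrightarrow> eval_comp (sep i) m d = (if d = r \<and> m = i then 1 else 0)"
  using separator[of i] by (auto simp: Pd_def eval_comp_homog)

abbreviation "FLs \<equiv> FL k n v L"

lemma FL_Pk: "a \<in> FLs \<Longrightarrow> a \<in> Pk k"
  by (simp add: FL_def)

lemma FL_eval_comp: "a \<in> FLs \<Longrightarrow> \<exists>c. \<forall>m<n. \<forall>d. eval_comp a m d = c d"
proof -
  assume "a \<in> FLs"
  then obtain M c where "a - (\<Sum>j\<le>M. const (c j) * L ^ j) \<in> I"
    by (auto simp: FL_def)
  then have "\<forall>m<n. \<forall>d. eval_comp a m d = (if d \<le> M then c d else 0)"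
    using eval_comp_eq_if_diff_in_vanish_ideal eval_comp_L_poly by metis
  then show ?thesis by (intro exI[where x = "\<lambda>d. if d \<le> M then c d else 0"])
qed

lemma FL_intro:
  "a \<in> Pk k \<Longrightarrow> (\<And>m d. m < n \<Longrightarrow> eval_comp a m d = (if d \<le> M then c d else 0)) \<Longrightarrow> a \<in> FLs"
  unfolding FL_def
  by (auto intro!: exI[of _ M] exI[of _ c] diff_in_vanish_ideal L_poly_Pk simp: eval_comp_L_poly)

lemma const_FL: "const c \<in> FLs"
  by (rule FL_intro[where M = 0 and c = "\<lambda>_. c"]) (auto simp: Pk_const eval_comp_homog[OF homog_const])

lemma L_power_FL: "L ^ j \<in> FLs"
  by (rule FL_intro[where M = j and c = "\<lambda>i. if i = j then 1 else 0"])
    (auto simp: Pk_power L_Pk eval_comp_L_power)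

lemma eval_comp_sum_mult_separator:
  assumes "m < n"
  shows "eval_comp (\<Sum>i<n. x i * sep i) m d = (if r \<le> d then eval_comp (x m) m (d - r) else 0)"
proof -
  have sep_i: "eval_comp (x i * sep i) m d = (if r \<le> d \<and> m = i then eval_comp (x i) m (d - r) else 0)" for i
  proof -
    have "eval_comp (x i * sep i) m d = eval_comp (sep i * x i) m d"
      by (simp add: mult.commute)
    then show ?thesis
      by (simp add: eval_comp_mult_delta[where e = r and c = "if m = i then 1 else 0"]
          eval_comp_separator[OF assms])
  qed
  show ?thesis
    unfolding eval_comp_sum sep_i using assms by (simp add: if_distrib sum.delta cong: if_cong)
qed

context
  fixes \<phi> assumes hom: "is_FL_hom k n v L \<phi>"
begin

lemma FL_hom_FL: "f \<in> Pk k \<Longrightarrow> \<phi> f \<in> FLs"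
  using hom by (simp add: is_FL_hom_def)

lemma FL_hom_cong:
  "f \<in> Pk k \<Longrightarrow> g \<in> Pk k \<Longrightarrow> f - g \<in> I \<Longrightarrow> m < n \<Longrightarrow> eval_comp (\<phi> f) m d = eval_comp (\<phi> g) m d"
  using hom eval_comp_eq_if_diff_in_vanish_ideal by (simp add: is_FL_hom_def)

lemma FL_hom_add:
  "f \<in> Pk k \<Longrightarrow> g \<in> Pk k \<Longrightarrow> m < n \<Longrightarrow> eval_comp (\<phi> (f + g)) m d = eval_comp (\<phi> f) m d + eval_comp (\<phi> g) m d"
  using hom eval_comp_eq_if_diff_in_vanish_ideal[of "\<phi> (f + g)" "\<phi> f + \<phi> g"]
  by (simp add: is_FL_hom_def eval_comp_add)

lemma FL_hom_linear:
  "a \<in> FLs \<Longrightarrow> f \<in> Pk k \<Longrightarrow> m < n \<Longrightarrow> eval_comp (\<phi> (a * f)) m d = eval_comp (a * \<phi> f) m d"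
  using hom eval_comp_eq_if_diff_in_vanish_ideal[of "\<phi> (a * f)" "a * \<phi> f"] by (simp add: is_FL_hom_def)

lemma FL_hom_zero: "m < n \<Longrightarrow> eval_comp (\<phi> 0) m d = 0"
  using FL_hom_add[of 0 0 m d] by (metis add.right_neutral add_left_cancel Pk_zero)

lemma FL_hom_sum:
  "(\<And>i. i \<in> A \<Longrightarrow> x i \<in> Pk k) \<Longrightarrow> m < n \<Longrightarrow>
    eval_comp (\<phi> (\<Sum>i\<in>A. x i)) m d = (\<Sum>i\<in>A. eval_comp (\<phi> (x i)) m d)"
proof (induction A rule: infinite_finite_induct)
  case (insert a F)
  then show ?case
    using FL_hom_add[of "x a" "\<Sum>i\<in>F. x i" m d] by (simp add: Pk_sum)
qed (simp_all add: FL_hom_zero)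

text \<open>Since \<open>L\<^sup>r\<^sup>-\<^sup>e h \<equiv> \<Sum>\<^sub>m h(v\<^sub>m) f\<^sub>m\<close>, linearity gives
  \<open>\<Sum>\<^sub>m h(v\<^sub>m) \<phi>(f\<^sub>m) = \<ell>\<^sup>r\<^sup>-\<^sup>e \<phi>(h)\<close>, which has no component of degree below \<open>r - e\<close>.\<close>

lemma FL_hom_separators_orthogonal:
  assumes h: "h \<in> Pd k e" and je: "j + e < r"
  shows "(\<Sum>m<n. eval (v m) h * eval_comp (\<phi> (sep m)) 0 j) = 0"
proof -
  have n0: "0 < n" using two_le_n by simp
  have hPk: "h \<in> Pk k" and hh: "homog e h" using h by (auto simp: Pd_def)
  define u where "u = L ^ (r - e) * h"
  define w where "w = (\<Sum>m<n. const (eval (v m) h) * sep m)"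
  have uPk: "u \<in> Pk k" unfolding u_def by (intro Pk_mult Pk_power L_Pk hPk)
  have wPk: "w \<in> Pk k" unfolding w_def by (intro Pk_sum Pk_mult Pk_const separator_Pk)
  have "u - w \<in> I"
  proof (rule diff_in_vanish_ideal[OF uPk wPk])
    fix m d assume m: "m < n"
    have "eval_comp u m d = (if d = r then eval (v m) h else 0)"
      unfolding u_def eval_comp_L_power_mult[OF m] eval_comp_homog[OF hh] using je by auto
    moreover have "eval_comp w m d = (if d = r then eval (v m) h else 0)"
      unfolding w_def eval_comp_sum using m
      by (simp add: eval_comp_const_mult eval_comp_separator if_distrib sum.delta cong: if_cong)
    ultimately show "eval_comp u m d = eval_comp w m d" by simp
  qed
  have "(\<Sum>m<n. eval (v m) h * eval_comp (\<phi> (sep m)) 0 j) = eval_comp (\<phi> w) 0 j"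
    unfolding w_def using n0
    by (simp add: FL_hom_sum Pk_mult Pk_const separator_Pk FL_hom_linear[OF const_FL]
        eval_comp_const_mult)
  also have "\<dots> = eval_comp (\<phi> u) 0 j"
    using FL_hom_cong[OF uPk wPk \<open>u - w \<in> I\<close> n0] by simp
  also have "\<dots> = eval_comp (L ^ (r - e) * \<phi> h) 0 j"
    unfolding u_def by (rule FL_hom_linear[OF L_power_FL hPk n0])
  also have "\<dots> = 0"
    using je by (auto simp: eval_comp_L_power_mult[OF n0])
  finally show ?thesis .
qed

end

section \<open>The canonical ideal through the trace pairing\<close>

definition canonical_cond :: "'a mpoly \<Rightarrow> bool" where
  "canonical_cond g \<longleftrightarrow>
     (\<forall>d<2 * r. \<forall>h\<in>Pd k (2 * r - 1 - d). (\<Sum>i<n. eval_comp g i d * eval (v i) h) = 0)"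

lemma canonical_cond_homog:
  assumes "homog D g"
  shows "canonical_cond g \<longleftrightarrow>
           (D < 2 * r \<longrightarrow> (\<forall>h\<in>Pd k (2 * r - 1 - D). (\<Sum>i<n. eval (v i) g * eval (v i) h) = 0))"
proof -
  have "(\<Sum>i<n. eval_comp g i d * eval (v i) h) = (if d = D then \<Sum>i<n. eval (v i) g * eval (v i) h else 0)"
    for d h
    by (simp add: eval_comp_homog[OF assms])
  then show ?thesis
    unfolding canonical_cond_def by auto
qed

lemma canon_hat_Pk: "g \<in> canon_hat k n v L \<Longrightarrow> g \<in> Pk k"
  by (simp add: canon_hat_def)

lemma canonical_cond_if_canon_hat:
  assumes "g \<in> canon_hat k n v L"
  shows "canonical_cond g"
proof -
  from assms obtain \<phi> where hom: "is_FL_hom k n v L \<phi>"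
    and g: "g - (\<Sum>i<n. \<phi> (sep i) * sep i) \<in> I"
    by (auto simp: canon_hat_def)
  have eval_g: "eval_comp g m d = (if r \<le> d then eval_comp (\<phi> (sep m)) 0 (d - r) else 0)"
    if m: "m < n" for m d
  proof -
    obtain c where "\<forall>m'<n. \<forall>d. eval_comp (\<phi> (sep m)) m' d = c d"
      using FL_eval_comp[OF FL_hom_FL[OF hom separator_Pk[of m]]] by blast
    then have "eval_comp (\<phi> (sep m)) m (d - r) = eval_comp (\<phi> (sep m)) 0 (d - r)"
      using m by simp
    then show ?thesis
      using eval_comp_eq_if_diff_in_vanish_ideal[OF g m] eval_comp_sum_mult_separator[OF m] by simp
  qed
  show ?thesis
    unfolding canonical_cond_def
  proof (intro allI impI ballI)
    fix d and h :: "'a mpoly" assume d: "d < 2 * r" and h: "h \<in> Pd k (2 * r - 1 - d)"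
    show "(\<Sum>i<n. eval_comp g i d * eval (v i) h) = 0"
    proof (cases "r \<le> d")
      case True
      have "(\<Sum>i<n. eval (v i) h * eval_comp (\<phi> (sep i)) 0 (d - r)) = 0"
        by (rule FL_hom_separators_orthogonal[OF hom h]) (use d True in arith)
      then show ?thesis
        using True by (simp add: eval_g mult.commute)
    qed (simp add: eval_g)
  qed
qed

text \<open>Conversely, a homogeneous \<open>g\<close> satisfying the condition equals \<open>\<Sum>\<^sub>i \<phi>(f\<^sub>i) f\<^sub>i\<close> for the
  homomorphism \<open>\<phi>(f) = \<Sum>\<^sub>j c\<^sub>j \<ell>\<^sup>j\<close> whose coefficient \<open>c\<^sub>j\<close> is the trace \<open>\<Sum>\<^sub>m (g f)\<^sub>j\<^sub>+\<^sub>2\<^sub>r(v\<^sub>m)\<close>.\<close>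

definition trace_coeff :: "'a mpoly \<Rightarrow> 'a mpoly \<Rightarrow> nat \<Rightarrow> 'a" where
  "trace_coeff g f j = (\<Sum>m<n. eval_comp (g * f) m (j + 2 * r))"

definition trace_hom :: "'a mpoly \<Rightarrow> 'a mpoly \<Rightarrow> 'a mpoly" where
  "trace_hom g f = (\<Sum>j\<le>max_deg (g * f). const (trace_coeff g f j) * L ^ j)"

lemma eval_comp_trace_hom: "m < n \<Longrightarrow> eval_comp (trace_hom g f) m j = trace_coeff g f j"
proof -
  have "trace_coeff g f j = 0" if "max_deg (g * f) < j"
    using that unfolding trace_coeff_def by (intro sum.neutral ballI) (auto simp: eval_comp_above_max_deg)
  moreover assume "m < n"
  ultimately show ?thesis
    unfolding trace_hom_def by (auto simp: eval_comp_L_poly)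
qed

lemma trace_hom_Pk: "trace_hom g f \<in> Pk k"
  unfolding trace_hom_def by (rule L_poly_Pk)

lemma trace_coeff_add: "trace_coeff g (f + f') j = trace_coeff g f j + trace_coeff g f' j"
  unfolding trace_coeff_def sum.distrib[symmetric] by (simp add: distrib_left eval_comp_add)

lemma trace_coeff_cong: "f - f' \<in> I \<Longrightarrow> trace_coeff g f j = trace_coeff g f' j"
  unfolding trace_coeff_def eval_comp_mult
  by (intro sum.cong refl) (simp add: eval_comp_eq_if_diff_in_vanish_ideal)

context
  fixes g :: "'a mpoly" and D :: nat
  assumes g_Pd: "g \<in> Pd k D" and g_cond: "canonical_cond g"
begin

lemma homog_g: "homog D g" and g_Pk: "g \<in> Pk k"
  using g_Pd by (auto simp: Pd_def)

lemma g_orthogonal: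
  "D < 2 * r \<Longrightarrow> h \<in> Pd k (2 * r - 1 - D) \<Longrightarrow> (\<Sum>i<n. eval (v i) g * eval (v i) h) = 0"
  using g_cond canonical_cond_homog[OF homog_g] by blast

lemma g_vanishes_below_reg_index:
  assumes D: "D < r" and m0: "m0 < n"
  shows "eval (v m0) g = 0"
proof -
  have "eval_surj (2 * r - 1 - D)"
    by (rule eval_surj_ge_reg_index) (use D in arith)
  then have "\<exists>h\<in>Pd k (2 * r - 1 - D). \<forall>m<n. eval (v m) h = (if m = m0 then 1 else 0)"
    unfolding eval_surj_def by (rule spec)
  then obtain h where h: "h \<in> Pd k (2 * r - 1 - D)" "\<forall>m<n. eval (v m) h = (if m = m0 then 1 else 0)"
    by blast
  have "(\<Sum>i<n. eval (v i) g * eval (v i) h) = (\<Sum>i<n. if i = m0 then eval (v m0) g else 0)"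
    using h(2) by (intro sum.cong) auto
  then show ?thesis
    using g_orthogonal[OF _ h(1)] D m0 by simp
qed

lemma eval_comp_g_mult: "eval_comp (g * f) m s = (if D \<le> s then eval (v m) g * eval_comp f m (s - D) else 0)"
  by (rule eval_comp_mult_delta) (simp add: eval_comp_homog[OF homog_g])

lemma trace_g_mult_below:
  assumes f: "f \<in> Pk k" and s: "s < 2 * r"
  shows "(\<Sum>m<n. eval_comp (g * f) m s) = 0"
proof (cases "D \<le> s")
  case True
  define h where "h = L ^ (2 * r - 1 - s) * hcomp (s - D) f"
  have "homog ((2 * r - 1 - s) * 1 + (s - D)) h"
    unfolding h_def by (intro homog_mult homog_power homog_L homog_hcomp)
  moreover have "(2 * r - 1 - s) * 1 + (s - D) = 2 * r - 1 - D" using s True by arith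
  ultimately have "h \<in> Pd k (2 * r - 1 - D)"
    using f by (auto simp: Pd_def h_def intro!: Pk_mult Pk_power L_Pk Pk_hcomp)
  moreover have "eval (v m) h = eval_comp f m (s - D)" if "m < n" for m
    using that by (simp add: h_def eval_mult eval_L_power eval_comp_def)
  ultimately have "(\<Sum>m<n. eval (v m) g * eval_comp f m (s - D)) = 0"
    using g_orthogonal[of h] s True by simp
  then show ?thesis
    using True by (simp add: eval_comp_g_mult)
qed (simp add: eval_comp_g_mult)

text \<open>\<open>\<bbbF>\<^sub>q[\<ell>]\<close>-linearity: the terms with \<open>j + 2r - d\<^sub>1 < 2r\<close> drop out by the previous lemma.\<close>

lemma trace_coeff_FL_linear:
  assumes f: "f \<in> Pk k" and a: "\<And>m d. m < n \<Longrightarrow> eval_comp a m d = c d"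
  shows "trace_coeff g (a * f) j = (\<Sum>d1\<le>j. c d1 * trace_coeff g f (j - d1))"
proof -
  define S where "S s = (\<Sum>m<n. eval_comp (g * f) m s)" for s
  have "trace_coeff g (a * f) j = (\<Sum>m<n. \<Sum>d1\<le>j + 2 * r. c d1 * eval_comp (g * f) m (j + 2 * r - d1))"
    unfolding trace_coeff_def by (intro sum.cong refl) (simp add: mult.left_commute[of g] eval_comp_mult a)
  also have "\<dots> = (\<Sum>d1\<le>j + 2 * r. c d1 * S (j + 2 * r - d1))"
    unfolding S_def by (subst sum.swap) (simp add: sum_distrib_left)
  also have "\<dots> = (\<Sum>d1\<le>j. c d1 * S (j + 2 * r - d1))"
    using trace_g_mult_below[OF f] by (intro sum.mono_neutral_right) (auto simp: S_def)
  also have "\<dots> = (\<Sum>d1\<le>j. c d1 * trace_coeff g f (j - d1))"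
    by (intro sum.cong refl) (simp add: S_def trace_coeff_def)
  finally show ?thesis .
qed

lemma is_FL_hom_trace_hom: "is_FL_hom k n v L (trace_hom g)"
  unfolding is_FL_hom_def
proof (intro conjI ballI impI)
  fix f :: "'a mpoly" assume "f \<in> Pk k"
  show "trace_hom g f \<in> FLs"
    by (rule FL_intro[where M = "max_deg (g * f)" and c = "trace_coeff g f"])
      (auto simp: trace_hom_Pk, simp_all add: trace_hom_def eval_comp_L_poly)
next
  fix f f' :: "'a mpoly" assume "f - f' \<in> I"
  then show "trace_hom g f - trace_hom g f' \<in> I"
    by (intro diff_in_vanish_ideal trace_hom_Pk) (simp add: eval_comp_trace_hom trace_coeff_cong)
next
  fix f f' :: "'a mpoly"
  show "trace_hom g (f + f') - (trace_hom g f + trace_hom g f') \<in> I"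
    by (intro diff_in_vanish_ideal trace_hom_Pk Pk_add)
      (simp add: eval_comp_trace_hom eval_comp_add trace_coeff_add)
next
  fix a f :: "'a mpoly" assume a: "a \<in> FLs" and f: "f \<in> Pk k"
  obtain c where c: "\<And>m d. m < n \<Longrightarrow> eval_comp a m d = c d"
    using FL_eval_comp[OF a] by blast
  show "trace_hom g (a * f) - a * trace_hom g f \<in> I"
    by (intro diff_in_vanish_ideal trace_hom_Pk Pk_mult FL_Pk[OF a])
      (simp add: eval_comp_trace_hom trace_coeff_FL_linear[OF f c] eval_comp_mult c)
qed

lemma trace_coeff_separator:
  assumes m: "m < n"
  shows "trace_coeff g (sep m) j = (if j + r = D then eval (v m) g else 0)"
proof -
  have "trace_coeff g (sep m) j = (\<Sum>m'<n. if m' = m then (if j + r = D then eval (v m) g else 0) else 0)"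
    unfolding trace_coeff_def eval_comp_g_mult
    by (intro sum.cong refl) (auto simp: eval_comp_separator)
  then show ?thesis using m by simp
qed

lemma canon_hat_if_canonical_cond: "g \<in> canon_hat k n v L"
  unfolding canon_hat_def
proof (intro CollectI conjI exI[of _ "trace_hom g"] is_FL_hom_trace_hom g_Pk)
  show "g - (\<Sum>i<n. trace_hom g (sep i) * sep i) \<in> I"
  proof (rule diff_in_vanish_ideal[OF g_Pk])
    show "(\<Sum>i<n. trace_hom g (sep i) * sep i) \<in> Pk k"
      by (intro Pk_sum Pk_mult trace_hom_Pk separator_Pk)
  next
    fix m d assume m: "m < n"
    have "eval_comp (\<Sum>i<n. trace_hom g (sep i) * sep i) m d = (if r \<le> d \<and> d = D then eval (v m) g else 0)"
      using m by (auto simp: eval_comp_sum_mult_separator eval_comp_trace_hom trace_coeff_separator)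
    then show "eval_comp g m d = eval_comp (\<Sum>i<n. trace_hom g (sep i) * sep i) m d"
      using g_vanishes_below_reg_index[OF _ m] by (auto simp: eval_comp_homog[OF homog_g])
  qed
qed

end

lemma homog_canon_hat_iff: "g \<in> Pd k D \<Longrightarrow> g \<in> canon_hat k n v L \<longleftrightarrow> canonical_cond g"
  using canon_hat_if_canonical_cond canonical_cond_if_canon_hat by blast

section \<open>The inverse system of the canonical ideal\<close>

lemma PhiX_eq:
  "PhiX k n v \<beta> = (if Poly_Mapping.keys \<beta> \<subseteq> {..<k} \<and> mdeg \<beta> = 2 * r - 1
     then (\<Sum>i<n. monom_eval (v i) \<beta>) else 0)"
  unfolding PhiX_def by (auto simp: monom_eval_superset[of "{..<k}"])

lemma pairing_PhiX: "f \<in> Pk k \<Longrightarrow> pairing f (PhiX k n v) = (\<Sum>i<n. eval_comp f i (2 * r - 1))"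
proof -
  assume f: "f \<in> Pk k"
  have "pairing f (PhiX k n v) = (\<Sum>\<alpha>\<in>Poly_Mapping.keys f. \<Sum>i<n.
      if mdeg \<alpha> = 2 * r - 1 then Poly_Mapping.lookup f \<alpha> * monom_eval (v i) \<alpha> else 0)"
    unfolding pairing_def
    by (intro sum.cong refl) (use f in \<open>auto simp: Pk_def PhiX_eq sum_distrib_left\<close>)
  also have "\<dots> = (\<Sum>i<n. eval_comp f i (2 * r - 1))"
    by (subst sum.swap) (simp add: eval_comp_def eval_hcomp)
  finally show ?thesis .
qed

lemma PhiX_nonzero: "PhiX k n v \<noteq> (\<lambda>_. 0)"
proof
  assume PhiX_0: "PhiX k n v = (\<lambda>_. 0)"
  define s where "s = L ^ (r - 1) * sep 0"
  have "homog ((r - 1) * 1 + r) s"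
    unfolding s_def using separator[of 0] by (intro homog_mult homog_power homog_L) (simp add: Pd_def)
  moreover have "(r - 1) * 1 + r = 2 * r - 1"
    using reg_index_pos by simp
  ultimately have hs: "homog (2 * r - 1) s" by simp
  have "s \<in> Pk k" unfolding s_def by (intro Pk_mult Pk_power L_Pk separator_Pk)
  moreover have "eval (v i) s = (if i = 0 then 1 else 0)" if "i < n" for i
    using that separator[of 0] by (simp add: s_def eval_mult eval_L_power)
  ultimately have "pairing s (PhiX k n v) = (\<Sum>i<n. if i = 0 then 1 else 0)"
    by (simp add: pairing_PhiX eval_comp_homog[OF hs])
  also have "\<dots> = 1" using two_le_n by simp
  finally show False
    using PhiX_0 by (simp add: pairing_def)
qed

lemma canon_hat_top_degree:
  "{g \<in> canon_hat k n v L. homog (2 * r - 1) g} = {g \<in> Pd k (2 * r - 1). (\<Sum>i<n. eval (v i) g) = 0}"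
proof -
  have "canonical_cond g \<longleftrightarrow> (\<Sum>i<n. eval (v i) g) = 0" if g: "homog (2 * r - 1) g" for g
  proof -
    have "(\<Sum>i<n. eval (v i) g * eval (v i) h) = (\<Sum>i<n. eval (v i) g) * Poly_Mapping.lookup h 0"
      if "h \<in> Pd k 0" for h
      using that by (simp add: Pd_def eval_homog_0 sum_distrib_right)
    moreover have "const 1 \<in> Pd k 0"
      by (simp add: Pd_def Pk_const homog_const)
    ultimately show ?thesis
      using reg_index_pos unfolding canonical_cond_homog[OF g] by (force simp: const_def)
  qed
  then show ?thesis
    using homog_canon_hat_iff canon_hat_Pk by (auto simp: Pd_def)
qed

lemma eval_comp_mult_monomial:
  "eval_comp (f * Poly_Mapping.single \<gamma> 1) m d =
     (if mdeg \<gamma> \<le> d then monom_eval (v m) \<gamma> * eval_comp f m (d - mdeg \<gamma>) else 0)"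
  by (subst mult.commute, rule eval_comp_mult_delta) (simp add: eval_comp_single)

lemma contract_PhiX:
  "f \<in> Pk k \<Longrightarrow> Poly_Mapping.keys \<gamma> \<subseteq> {..<k} \<Longrightarrow>
    contract f (PhiX k n v) \<gamma> = (if mdeg \<gamma> \<le> 2 * r - 1
       then (\<Sum>i<n. eval_comp f i (2 * r - 1 - mdeg \<gamma>) * monom_eval (v i) \<gamma>) else 0)"
  by (simp add: contract_eq_pairing pairing_PhiX Pk_mult Pk_single eval_comp_mult_monomial mult.commute)

lemma Dmod_vanishes: "\<psi> \<in> Dmod k \<Longrightarrow> \<not> Poly_Mapping.keys \<gamma> \<subseteq> {..<k} \<Longrightarrow> \<psi> \<gamma> = 0"
  by (auto simp: Dmod_def)

lemma contract_PhiX_Dmod: "f \<in> Pk k \<Longrightarrow> contract f (PhiX k n v) \<in> Dmod k"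
proof -
  assume f: "f \<in> Pk k"
  have supp: "Poly_Mapping.keys \<gamma> \<subseteq> {..<k} \<and> mdeg \<gamma> \<le> 2 * r - 1"
    if nonzero: "contract f (PhiX k n v) \<gamma> \<noteq> 0" for \<gamma>
  proof -
    obtain \<alpha> where "\<alpha> \<in> Poly_Mapping.keys f" "Poly_Mapping.lookup f \<alpha> * PhiX k n v (\<alpha> + \<gamma>) \<noteq> 0"
      using nonzero unfolding contract_def by (rule sum.not_neutral_contains_not_neutral)
    then have "PhiX k n v (\<alpha> + \<gamma>) \<noteq> 0" by auto
    then have "Poly_Mapping.keys (\<alpha> + \<gamma>) \<subseteq> {..<k}" "mdeg (\<alpha> + \<gamma>) = 2 * r - 1"
      by (auto simp: PhiX_eq split: if_splits)
    then show ?thesis by (auto simp: keys_add_nat mdeg_add)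
  qed
  then have "{\<gamma>. contract f (PhiX k n v) \<gamma> \<noteq> 0} \<subseteq> {\<gamma>. Poly_Mapping.keys \<gamma> \<subseteq> {..<k} \<and> mdeg \<gamma> \<le> 2 * r - 1}"
    by blast
  then have "finite {\<gamma>. contract f (PhiX k n v) \<gamma> \<noteq> 0}"
    by (rule finite_subset) (rule finite_monomials_deg_le)
  then show ?thesis unfolding Dmod_def using supp by blast
qed

lemma contract_PhiX_in_perp: "f \<in> Pk k \<Longrightarrow> contract f (PhiX k n v) \<in> perp k (canon_hat k n v L)"
proof -
  assume f: "f \<in> Pk k"
  let ?\<psi> = "contract f (PhiX k n v)"
  have "contract g ?\<psi> \<gamma> = 0" if g: "g \<in> canon_hat k n v L" for g \<gamma>
  proof (cases "Poly_Mapping.keys \<gamma> \<subseteq> {..<k}")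
    case False
    then have "?\<psi> (\<alpha> + \<gamma>) = 0" for \<alpha>
      by (intro Dmod_vanishes[OF contract_PhiX_Dmod[OF f]]) (auto simp: keys_add_nat)
    then show ?thesis by (simp add: contract_def)
  next
    case True
    define q where "q = Poly_Mapping.single \<gamma> (1::'a) * f"
    have gPk: "g \<in> Pk k" by (rule canon_hat_Pk[OF g])
    have qPk: "q \<in> Pk k" unfolding q_def using True f by (intro Pk_mult Pk_single)
    have "contract g ?\<psi> \<gamma> = pairing (g * q) (PhiX k n v)"
      by (simp add: contract_eq_pairing pairing_contract q_def mult.assoc)
    also have "\<dots> = (\<Sum>d\<le>2 * r - 1. \<Sum>i<n. eval_comp g i d * eval (v i) (hcomp (2 * r - 1 - d) q))"
      by (simp add: pairing_PhiX Pk_mult gPk qPk eval_comp_mult eval_comp_def[of q]) (rule sum.swap)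
    also have "\<dots> = 0"
    proof (rule sum.neutral, rule ballI)
      fix d assume "d \<in> {..2 * r - 1}"
      then have "d < 2 * r" using reg_index_pos by auto
      then show "(\<Sum>i<n. eval_comp g i d * eval (v i) (hcomp (2 * r - 1 - d) q)) = 0"
        using canonical_cond_if_canon_hat[OF g] hcomp_Pd[OF qPk] unfolding canonical_cond_def by blast
    qed
    finally show ?thesis .
  qed
  then show ?thesis
    using contract_PhiX_Dmod[OF f] by (auto simp: perp_def)
qed

definition trace_gram :: "(nat \<Rightarrow>\<^sub>0 nat) \<Rightarrow> (nat \<Rightarrow>\<^sub>0 nat) \<Rightarrow> 'a" where
  "trace_gram \<beta> \<gamma> = (\<Sum>i<n. monom_eval (v i) \<beta> * monom_eval (v i) \<gamma>)"

lemma trace_pairing_expand: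
  assumes "finite M" "Poly_Mapping.keys p \<subseteq> M" "finite H" "Poly_Mapping.keys h \<subseteq> H"
  shows "(\<Sum>i<n. eval (v i) p * eval (v i) h) =
    (\<Sum>\<gamma>\<in>H. Poly_Mapping.lookup h \<gamma> * (\<Sum>\<beta>\<in>M. Poly_Mapping.lookup p \<beta> * trace_gram \<beta> \<gamma>))"
proof -
  have "(\<Sum>i<n. eval (v i) p * eval (v i) h) = (\<Sum>i<n. \<Sum>\<gamma>\<in>H. \<Sum>\<beta>\<in>M.
      Poly_Mapping.lookup h \<gamma> * (Poly_Mapping.lookup p \<beta> * (monom_eval (v i) \<beta> * monom_eval (v i) \<gamma>)))"
    by (simp add: eval_superset[OF assms(1,2)] eval_superset[OF assms(3,4)] sum_product mult_ac)
  also have "\<dots> = (\<Sum>\<gamma>\<in>H. \<Sum>\<beta>\<in>M. \<Sum>i<n.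
      Poly_Mapping.lookup h \<gamma> * (Poly_Mapping.lookup p \<beta> * (monom_eval (v i) \<beta> * monom_eval (v i) \<gamma>)))"
    by (subst sum.swap, subst (2) sum.swap) (rule refl)
  finally show ?thesis
    by (simp add: trace_gram_def sum_distrib_left)
qed

lemma trace_sum_monomials:
  "(\<Sum>i<n. eval (v i) (\<Sum>\<gamma>\<in>H. Poly_Mapping.single \<gamma> (b \<gamma>)) * monom_eval (v i) \<beta>)
     = (\<Sum>\<gamma>\<in>H. b \<gamma> * trace_gram \<beta> \<gamma>)"
proof -
  have "(\<Sum>i<n. eval (v i) (\<Sum>\<gamma>\<in>H. Poly_Mapping.single \<gamma> (b \<gamma>)) * monom_eval (v i) \<beta>)
      = (\<Sum>i<n. \<Sum>\<gamma>\<in>H. b \<gamma> * (monom_eval (v i) \<beta> * monom_eval (v i) \<gamma>))"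
    by (simp add: eval_sum sum_distrib_left sum_distrib_right mult_ac)
  then show ?thesis
    by (subst (asm) sum.swap) (simp add: trace_gram_def sum_distrib_left)
qed

lemma perp_vanishes_above_top_degree:
  assumes \<psi>: "\<psi> \<in> perp k (canon_hat k n v L)" and deg: "2 * r - 1 < mdeg \<gamma>"
  shows "\<psi> \<gamma> = 0"
proof (cases "Poly_Mapping.keys \<gamma> \<subseteq> {..<k}")
  case True
  define x where "x = Poly_Mapping.single \<gamma> (1::'a)"
  have hom: "homog (mdeg \<gamma>) x"
    unfolding x_def by (rule homog_single) simp
  then have "x \<in> Pd k (mdeg \<gamma>)"
    using True by (simp add: Pd_def Pk_single x_def)
  moreover have "canonical_cond x"
    unfolding canonical_cond_homog[OF hom] using deg by simp
  ultimately have "x \<in> canon_hat k n v L"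
    using homog_canon_hat_iff by blast
  then have "contract x \<psi> 0 = 0"
    using \<psi> by (auto simp: perp_def)
  then show ?thesis by (simp add: contract_def x_def)
next
  case False
  then show ?thesis using \<psi> by (simp add: perp_def Dmod_vanishes)
qed

text \<open>On monomials of degree \<open>D\<close>, \<open>\<psi>\<close> kills every form that is trace orthogonal to
  \<open>P\<^sub>2\<^sub>r\<^sub>-\<^sub>1\<^sub>-\<^sub>D\<close>, because such forms lie in the canonical ideal.\<close>

lemma perp_orthogonal_to_annihilator:
  assumes \<psi>: "\<psi> \<in> perp k (canon_hat k n v L)"
  shows "orthogonal_to_annihilator (monomials k D) (monomials k (2 * r - 1 - D)) trace_gram \<psi>"
  unfolding orthogonal_to_annihilator_def
proof (intro allI impI)
  let ?M = "monomials k D" and ?H = "monomials k (2 * r - 1 - D)"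
  have fin: "finite ?M" "finite ?H" by (simp_all add: finite_monomials)
  fix a assume a: "\<forall>\<gamma>\<in>?H. (\<Sum>\<beta>\<in>?M. a \<beta> * trace_gram \<beta> \<gamma>) = 0"
  define p where "p = (\<Sum>\<beta>\<in>?M. Poly_Mapping.single \<beta> (a \<beta>))"
  have lookup_p: "Poly_Mapping.lookup p \<beta> = (if \<beta> \<in> ?M then a \<beta> else 0)" for \<beta>
    using fin by (simp add: p_def lookup_sum lookup_single when_def sum.delta)
  have keys_p: "Poly_Mapping.keys p \<subseteq> ?M"
    by (auto simp: in_keys_iff lookup_p split: if_splits)
  have hom: "homog D p" and p_Pd: "p \<in> Pd k D"
    unfolding p_def Pd_def by (auto simp: monomials_def intro!: Pk_sum Pk_single homog_sum homog_single)
  have "(\<Sum>i<n. eval (v i) p * eval (v i) h) = 0" if h: "h \<in> Pd k (2 * r - 1 - D)" for h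
  proof -
    have "Poly_Mapping.keys h \<subseteq> ?H"
      using h by (auto simp: monomials_def Pd_def Pk_def homog_def)
    then show ?thesis
      using a by (simp add: trace_pairing_expand[OF fin(1) keys_p fin(2)] lookup_p)
  qed
  then have "p \<in> canon_hat k n v L"
    using homog_canon_hat_iff[OF p_Pd] canonical_cond_homog[OF hom] by blast
  then have "contract p \<psi> 0 = 0"
    using \<psi> by (auto simp: perp_def)
  then show "(\<Sum>\<beta>\<in>?M. a \<beta> * \<psi> \<beta>) = 0"
    by (simp add: contract_superset[OF fin(1) keys_p] lookup_p)
qed

lemma perp_on_monomials:
  assumes \<psi>: "\<psi> \<in> perp k (canon_hat k n v L)"
  shows "\<exists>F\<in>Pd k (2 * r - 1 - D). \<forall>\<beta>\<in>monomials k D. \<psi> \<beta> = (\<Sum>i<n. eval (v i) F * monom_eval (v i) \<beta>)"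
proof -
  let ?H = "monomials k (2 * r - 1 - D)"
  obtain b where b: "\<forall>\<beta>\<in>monomials k D. \<psi> \<beta> = (\<Sum>\<gamma>\<in>?H. b \<gamma> * trace_gram \<beta> \<gamma>)"
    using lincomb_if_orthogonal_to_annihilator[OF _ _ perp_orthogonal_to_annihilator[OF \<psi>]]
    by (simp add: finite_monomials) blast
  have "(\<Sum>\<gamma>\<in>?H. Poly_Mapping.single \<gamma> (b \<gamma>)) \<in> Pd k (2 * r - 1 - D)"
    unfolding Pd_def by (auto simp: monomials_def intro!: Pk_sum Pk_single homog_sum homog_single)
  then show ?thesis
    using b by (intro bexI[of _ "\<Sum>\<gamma>\<in>?H. Poly_Mapping.single \<gamma> (b \<gamma>)"] ballI) (simp_all add: trace_sum_monomials)
qed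

lemma perp_subset_contract_PhiX:
  assumes \<psi>: "\<psi> \<in> perp k (canon_hat k n v L)"
  shows "\<exists>f\<in>Pk k. \<psi> = contract f (PhiX k n v)"
proof -
  have "\<forall>D. \<exists>F. F \<in> Pd k (2 * r - 1 - D) \<and>
      (\<forall>\<beta>\<in>monomials k D. \<psi> \<beta> = (\<Sum>i<n. eval (v i) F * monom_eval (v i) \<beta>))"
    using perp_on_monomials[OF \<psi>] by blast
  then obtain F where F_all: "\<forall>D. F D \<in> Pd k (2 * r - 1 - D) \<and>
      (\<forall>\<beta>\<in>monomials k D. \<psi> \<beta> = (\<Sum>i<n. eval (v i) (F D) * monom_eval (v i) \<beta>))"
    by (rule choice[THEN exE])
  then have F: "F D \<in> Pd k (2 * r - 1 - D)"
    "\<And>\<beta>. \<beta> \<in> monomials k D \<Longrightarrow> \<psi> \<beta> = (\<Sum>i<n. eval (v i) (F D) * monom_eval (v i) \<beta>)" for D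
    by blast+
  define f where "f = (\<Sum>D\<le>2 * r - 1. F D)"
  have f_Pk: "f \<in> Pk k" unfolding f_def using F by (intro Pk_sum) (auto simp: Pd_def)
  have eval_comp_f: "eval_comp f i (2 * r - 1 - D) = eval (v i) (F D)" if "D \<le> 2 * r - 1" for i D
    unfolding f_def using F that by (intro eval_comp_sum_homog) (auto simp: Pd_def)
  have "\<psi> \<gamma> = contract f (PhiX k n v) \<gamma>" for \<gamma>
  proof (cases "Poly_Mapping.keys \<gamma> \<subseteq> {..<k}")
    case True
    show ?thesis
    proof (cases "mdeg \<gamma> \<le> 2 * r - 1")
      case True
      then show ?thesis
        using F(2)[of \<gamma>] eval_comp_f[OF True] \<open>Poly_Mapping.keys \<gamma> \<subseteq> {..<k}\<close>
        by (simp add: contract_PhiX[OF f_Pk] monomials_def)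
    next
      case False
      then show ?thesis
        using perp_vanishes_above_top_degree[OF \<psi>] by (simp add: contract_PhiX[OF f_Pk True])
    qed
  next
    case False
    then show ?thesis
      using \<psi> Dmod_vanishes[OF contract_PhiX_Dmod[OF f_Pk]] by (simp add: perp_def Dmod_vanishes)
  qed
  then show ?thesis
    using f_Pk by blast
qed

end

theorem theorem7p5:
  fixes k n :: nat
    and v :: "nat \<Rightarrow> nat \<Rightarrow> 'a::{field,finite}"
    and L :: "'a mpoly"
  assumes "n \<ge> 2"
    and "\<forall>i<n. \<forall>j<n. i \<noteq> j \<longrightarrow> (\<exists>t<k. v i t \<noteq> v j t)"
    and "L \<in> Pd k 1"
    and "\<forall>i<n. eval (v i) L = 1"
  shows "({g \<in> canon_hat k n v L. homog (2 * reg_index k n v - 1) g}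
           = {g \<in> Pd k (2 * reg_index k n v - 1). (\<Sum>i<n. eval (v i) g) = 0})
         \<and> PhiX k n v \<noteq> (\<lambda>_. 0)
         \<and> perp k (canon_hat k n v L) = {contract f (PhiX k n v) | f. f \<in> Pk k}"
proof -
  interpret normalized_points k n v L
    using assms by unfold_locales
  have "perp k (canon_hat k n v L) = {contract f (PhiX k n v) | f. f \<in> Pk k}"
    using perp_subset_contract_PhiX contract_PhiX_in_perp by blast
  then show ?thesis
    using canon_hat_top_degree PhiX_nonzero by blast
qed

end
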